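(* Let $U\subset\mathbb{R}^n$ and $V\subset\mathbb{R}^m$ be open, let $X\subset U$ be closed in $U$, and let $\varphi:V\to U$ be a $\mathcal{C}^p$ mapping with $\varphi(V)\subset X$. Let $f:X\to\mathbb{R}$, set $g=f\circ\varphi$, and suppose $\nabla^pf:\tau^p(X)\to\mathbb{R}$. Then: (1) $g\in\mathcal{C}^p(V)$; (2) $g$ is formally a composite with $\varphi$: for every $a\in X$ there exists $P\in\mathcal{P}_p(\mathbb{R}^n)$ such that $g-P\circ\varphi$ is $p$-flat (all partial derivatives of order $\le p$ vanish) at every point $b\in\varphi^{-1}(a)$.
   Context: $\mathcal{P}_p=\mathcal{P}_p(\mathbb{R}^n)$: real polynomials on $\mathbb{R}^n$ of degree $\le p$; $\mathcal{P}_p^*$ dual; $r=\dim\mathcal{P}_p$. For $\xi\in\mathcal{P}_p^*$, $b\in\mathbb{R}^n$, $|\alpha|\le p$: $\xi_\alpha(b):=\xi(\tfrac1{\alpha!}(x-b)^\alpha)$; $\delta_a(P)=P(a)$. A bundle over $X$ with fibres in $W$ is a subset of $X\times W$ with linear-subspace fibres. For a bundle $E\subset X\times\mathcal{P}_p^*$: $\Delta E=\{(a,b,\xi+\eta):a,b\in X,\xi\in E_a,\eta\in E_b,|a-b|^{p-|\alpha|}|\eta_\alpha(b)|\le1\ \forall|\alpha|\le p\}$, $E'=\{(a,\xi):(a,a,\xi)\in\overline{\Delta E}\}$, $\rho(E)=\{(a,\xi):\xi\in\operatorname{Span}E'_a\}$; $\tau^p(X):=\rho^{2r}(E_0)$ with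 $E_0=\{(a,\lambda\delta_a)\}$ (iterates constant from $2r$ on). For bundles $\Phi\subset X\times(\mathcal{P}_p^*\times\mathbb{R})$: $\Delta\Phi=\{(a,b,\xi+\eta,\lambda+\mu):(\xi,\lambda)\in\Phi_a,(\eta,\mu)\in\Phi_b,|a-b|^{p-|\alpha|}|\eta_\alpha(b)|\le1\ \forall|\alpha|\le p\}$, $\Phi'=\{(a,\xi,\lambda):(a,a,\xi,\lambda)\in\overline{\Delta\Phi}\}$, $\rho(\Phi)$ fibrewise span of $\Phi'$; $\nabla^pf:=\rho^{2(r+1)}(\Phi_0)$ with $\Phi_0=\{(a,\lambda\delta_a,\lambda f(a))\}$. "$\nabla^pf:\tau^p(X)\to\mathbb{R}$" means each $\xi\in\tau^p_a(X)$ has exactly one $\lambda$ with $(a,\xi,\lambda)\in\nabla^pf$. *)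

theory Defs
  imports "HOL-Analysis.Analysis"
begin

definition mi_abs :: "('n::finite \<Rightarrow> nat) \<Rightarrow> nat" where
  "mi_abs \<alpha> = (\<Sum>i\<in>UNIV. \<alpha> i)"

definition MI :: "nat \<Rightarrow> ('n::finite \<Rightarrow> nat) set" where
  "MI p = {\<alpha>. mi_abs \<alpha> \<le> p}"

definition mi_fact :: "('n::finite \<Rightarrow> nat) \<Rightarrow> real" where
  "mi_fact \<alpha> = (\<Prod>i\<in>UNIV. fact (\<alpha> i))"

definition mono :: "('n::finite \<Rightarrow> nat) \<Rightarrow> real^'n \<Rightarrow> real" where
  "mono \<alpha> x = (\<Prod>i\<in>UNIV. (x $ i) ^ (\<alpha> i))"

definition polys :: "nat \<Rightarrow> (real^'n::finite \<Rightarrow> real) set" where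
  "polys p = {P. \<exists>c. P = (\<lambda>x. \<Sum>\<alpha>\<in>MI p. c \<alpha> * mono \<alpha> x)}"

(* A functional xi on P_p is represented by its values on the monomial basis:
   xi \<alpha> = xi(x^\<alpha>) for |\<alpha>| \<le> p, and 0 for other \<alpha>. *)
definition dual_ev :: "nat \<Rightarrow> (('n::finite \<Rightarrow> nat) \<Rightarrow> real) \<Rightarrow> (('n \<Rightarrow> nat) \<Rightarrow> real) \<Rightarrow> real" where
  "dual_ev p \<xi> c = (\<Sum>\<alpha>\<in>MI p. c \<alpha> * \<xi> \<alpha>)"

(* coefficients (in the monomial basis) of (x - b)^\<alpha> / \<alpha>! *)
definition shifted_mono_coeff :: "('n::finite \<Rightarrow> nat) \<Rightarrow> real^'n \<Rightarrow> ('n \<Rightarrow> nat) \<Rightarrow> real" where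
  "shifted_mono_coeff \<alpha> b \<beta> =
     (if (\<forall>i. \<beta> i \<le> \<alpha> i)
      then (\<Prod>i\<in>UNIV. real (\<alpha> i choose \<beta> i) * (- (b $ i)) ^ (\<alpha> i - \<beta> i)) / mi_fact \<alpha>
      else 0)"

definition jet :: "nat \<Rightarrow> (('n::finite \<Rightarrow> nat) \<Rightarrow> real) \<Rightarrow> ('n \<Rightarrow> nat) \<Rightarrow> real^'n \<Rightarrow> real" where
  "jet p \<xi> \<alpha> b = dual_ev p \<xi> (shifted_mono_coeff \<alpha> b)"

definition delta :: "nat \<Rightarrow> real^'n::finite \<Rightarrow> ('n \<Rightarrow> nat) \<Rightarrow> real" where
  "delta p a = (\<lambda>\<alpha>. if \<alpha> \<in> MI p then mono \<alpha> a else 0)"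

definition lin_span :: "('a \<Rightarrow> real) set \<Rightarrow> ('a \<Rightarrow> real) set" where
  "lin_span S = {v. \<exists>F c. finite F \<and> F \<subseteq> S \<and> v = (\<lambda>x. \<Sum>u\<in>F. c u * u x)}"

definition lin_span2 :: "(('a \<Rightarrow> real) \<times> real) set \<Rightarrow> (('a \<Rightarrow> real) \<times> real) set" where
  "lin_span2 S = {v. \<exists>F c. finite F \<and> F \<subseteq> S \<and>
      v = ((\<lambda>x. \<Sum>u\<in>F. c u * fst u x), (\<Sum>u\<in>F. c u * snd u))}"

definition DeltaE :: "nat \<Rightarrow> (real^'n::finite) set \<Rightarrow> ((real^'n) \<times> (('n \<Rightarrow> nat) \<Rightarrow> real)) set
    \<Rightarrow> ((real^'n) \<times> (real^'n) \<times> (('n \<Rightarrow> nat) \<Rightarrow> real)) set" where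
  "DeltaE p X E = {(a, b, \<zeta>). a \<in> X \<and> b \<in> X \<and> (\<exists>\<xi> \<eta>. (a, \<xi>) \<in> E \<and> (b, \<eta>) \<in> E \<and>
      \<zeta> = (\<lambda>\<alpha>. \<xi> \<alpha> + \<eta> \<alpha>) \<and>
      (\<forall>\<alpha>\<in>MI p. norm (a - b) ^ (p - mi_abs \<alpha>) * \<bar>jet p \<eta> \<alpha> b\<bar> \<le> 1))}"

definition primeE :: "nat \<Rightarrow> (real^'n::finite) set \<Rightarrow> ((real^'n) \<times> (('n \<Rightarrow> nat) \<Rightarrow> real)) set
    \<Rightarrow> ((real^'n) \<times> (('n \<Rightarrow> nat) \<Rightarrow> real)) set" where
  "primeE p X E = {(a, \<xi>). a \<in> X \<and> (a, a, \<xi>) \<in> closure (DeltaE p X E)}"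

definition rhoE :: "nat \<Rightarrow> (real^'n::finite) set \<Rightarrow> ((real^'n) \<times> (('n \<Rightarrow> nat) \<Rightarrow> real)) set
    \<Rightarrow> ((real^'n) \<times> (('n \<Rightarrow> nat) \<Rightarrow> real)) set" where
  "rhoE p X E = {(a, \<xi>). a \<in> X \<and> \<xi> \<in> lin_span {\<eta>. (a, \<eta>) \<in> primeE p X E}}"

definition E0 :: "nat \<Rightarrow> (real^'n::finite) set \<Rightarrow> ((real^'n) \<times> (('n \<Rightarrow> nat) \<Rightarrow> real)) set" where
  "E0 p X = {(a, \<xi>). a \<in> X \<and> (\<exists>l::real. \<xi> = (\<lambda>\<alpha>. l * delta p a \<alpha>))}"

definition dimP :: "nat \<Rightarrow> 'n::finite itself \<Rightarrow> nat" where
  "dimP p _ = card (MI p :: ('n \<Rightarrow> nat) set)"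

definition tau :: "nat \<Rightarrow> (real^'n::finite) set \<Rightarrow> ((real^'n) \<times> (('n \<Rightarrow> nat) \<Rightarrow> real)) set" where
  "tau p X = (rhoE p X ^^ (2 * dimP p TYPE('n))) (E0 p X)"

definition DeltaPhi :: "nat \<Rightarrow> (real^'n::finite) set \<Rightarrow> ((real^'n) \<times> (('n \<Rightarrow> nat) \<Rightarrow> real) \<times> real) set
    \<Rightarrow> ((real^'n) \<times> (real^'n) \<times> (('n \<Rightarrow> nat) \<Rightarrow> real) \<times> real) set" where
  "DeltaPhi p X \<Phi> = {(a, b, \<zeta>, \<nu>). a \<in> X \<and> b \<in> X \<and> (\<exists>\<xi> l \<eta> \<mu>. (a, \<xi>, l) \<in> \<Phi> \<and> (b, \<eta>, \<mu>) \<in> \<Phi> \<and>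
      \<zeta> = (\<lambda>\<alpha>. \<xi> \<alpha> + \<eta> \<alpha>) \<and> \<nu> = l + \<mu> \<and>
      (\<forall>\<alpha>\<in>MI p. norm (a - b) ^ (p - mi_abs \<alpha>) * \<bar>jet p \<eta> \<alpha> b\<bar> \<le> 1))}"

definition primePhi :: "nat \<Rightarrow> (real^'n::finite) set \<Rightarrow> ((real^'n) \<times> (('n \<Rightarrow> nat) \<Rightarrow> real) \<times> real) set
    \<Rightarrow> ((real^'n) \<times> (('n \<Rightarrow> nat) \<Rightarrow> real) \<times> real) set" where
  "primePhi p X \<Phi> = {(a, \<xi>, l). a \<in> X \<and> (a, a, \<xi>, l) \<in> closure (DeltaPhi p X \<Phi>)}"

definition rhoPhi :: "nat \<Rightarrow> (real^'n::finite) set \<Rightarrow> ((real^'n) \<times> (('n \<Rightarrow> nat) \<Rightarrow> real) \<times> real) set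
    \<Rightarrow> ((real^'n) \<times> (('n \<Rightarrow> nat) \<Rightarrow> real) \<times> real) set" where
  "rhoPhi p X \<Phi> = {(a, \<xi>, l). a \<in> X \<and> (\<xi>, l) \<in> lin_span2 {(\<eta>, \<mu>). (a, \<eta>, \<mu>) \<in> primePhi p X \<Phi>}}"

definition Phi0 :: "nat \<Rightarrow> (real^'n::finite) set \<Rightarrow> (real^'n \<Rightarrow> real) \<Rightarrow> ((real^'n) \<times> (('n \<Rightarrow> nat) \<Rightarrow> real) \<times> real) set" where
  "Phi0 p X f = {(a, \<xi>, \<nu>). a \<in> X \<and> (\<exists>l::real. \<xi> = (\<lambda>\<alpha>. l * delta p a \<alpha>) \<and> \<nu> = l * f a)}"

definition nabla :: "nat \<Rightarrow> (real^'n::finite) set \<Rightarrow> (real^'n \<Rightarrow> real) \<Rightarrow> ((real^'n) \<times> (('n \<Rightarrow> nat) \<Rightarrow> real) \<times> real) set" where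
  "nabla p X f = (rhoPhi p X ^^ (2 * (dimP p TYPE('n) + 1))) (Phi0 p X f)"

(* "nabla^p f : tau^p(X) -> R" *)
definition nabla_is_function :: "nat \<Rightarrow> (real^'n::finite) set \<Rightarrow> (real^'n \<Rightarrow> real) \<Rightarrow> bool" where
  "nabla_is_function p X f \<longleftrightarrow>
     (\<forall>a \<xi>. (a, \<xi>) \<in> tau p X \<longrightarrow> (\<exists>!l. (a, \<xi>, l) \<in> nabla p X f))"

definition partial :: "'m::finite \<Rightarrow> (real^'m \<Rightarrow> real) \<Rightarrow> real^'m \<Rightarrow> real" where
  "partial i h x = deriv (\<lambda>t. h (x + t *\<^sub>R axis i 1)) 0"

fun partial_iter :: "'m::finite list \<Rightarrow> (real^'m \<Rightarrow> real) \<Rightarrow> real^'m \<Rightarrow> real" where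
  "partial_iter [] h = h"
| "partial_iter (i # is) h = partial i (partial_iter is h)"

fun Ck :: "nat \<Rightarrow> (real^'m::finite) set \<Rightarrow> (real^'m \<Rightarrow> real) \<Rightarrow> bool" where
  "Ck 0 V h = continuous_on V h"
| "Ck (Suc k) V h = (continuous_on V h \<and>
     (\<forall>i. \<forall>x\<in>V. (\<lambda>t. h (x + t *\<^sub>R axis i 1)) differentiable (at 0)) \<and>
     (\<forall>i. Ck k V (partial i h)))"

definition Ck_map :: "nat \<Rightarrow> (real^'m::finite) set \<Rightarrow> (real^'m \<Rightarrow> real^'n::finite) \<Rightarrow> bool" where
  "Ck_map k V \<phi> \<longleftrightarrow> (\<forall>j. Ck k V (\<lambda>x. \<phi> x $ j))"

definition flat_at :: "nat \<Rightarrow> (real^'m::finite \<Rightarrow> real) \<Rightarrow> real^'m \<Rightarrow> bool" where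
  "flat_at p h b \<longleftrightarrow> (\<forall>js. length js \<le> p \<longrightarrow> partial_iter js h b = 0)"

end

theory Submission
  imports Defs
begin

(*
  Write g = f o phi, and Psi_J(y) for the functional P |-> d_J (P o phi)(y) on P_p.
  By induction on |J| <= p, each triple (phi y, Psi_J(y), d_J g(y)) lies in the k-th stage
  rho^k(Phi_0) of the construction of nabla^p f, k = |J|.  For the inductive step, compare the
  triples at y and at y + t e_i: after scaling by c/t with a small fixed c > 0 their difference
  satisfies the inequality defining Delta, because the jets of order p of Psi_J vanish and the
  remaining jets grow like 1/t while |phi y - phi (y + t e_i)| = O(t).  Hence their limit lies in
  the next stage.  Since nabla^p f is single-valued over tau^p(X), which contains all (a, 0),
  each stage below the depth of nabla^p f is the graph of a function; a compactness argument
  then shows that the difference quotients of d_J g converge, which proves (1).  For (2), the top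
  stage over a point a is the graph of a linear functional on P_p^*, i.e. of evaluation at some
  P in P_p, and the triples over the fibre of a say that every d_J (g - P o phi) vanishes there.
*)

section \<open>Limits and difference quotients\<close>

lemma tendsto_fun_iff_pointwise:
  "((f :: 'b \<Rightarrow> 'a \<Rightarrow> real) \<longlongrightarrow> l) F \<longleftrightarrow> (\<forall>i. ((\<lambda>c. f c i) \<longlongrightarrow> l i) F)"
  using limitin_componentwise[of "\<lambda>i. euclidean" UNIV f l F] by (simp add: euclidean_product_topology)

lemma LIMSEQ_by_subsequences:
  fixes X :: "nat \<Rightarrow> 'a::metric_space"
  assumes "\<And>r :: nat \<Rightarrow> nat. strict_mono r \<Longrightarrow> \<exists>s. strict_mono s \<and> (X \<circ> r \<circ> s) \<longlonglongrightarrow> L"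
  shows "X \<longlonglongrightarrow> L"
proof (rule ccontr)
  assume "\<not> X \<longlonglongrightarrow> L"
  then obtain e where e: "e > 0" "\<forall>N. \<exists>n\<ge>N. e \<le> dist (X n) L"
    unfolding LIMSEQ_def by (auto simp: not_less)
  define S where "S = {n. e \<le> dist (X n) L}"
  have "infinite S" unfolding infinite_nat_iff_unbounded_le S_def using e(2) by blast
  then have r: "strict_mono (enumerate S)" "\<And>j. e \<le> dist (X (enumerate S j)) L"
    using strict_mono_enumerate enumerate_in_set unfolding S_def by blast+
  obtain s where "strict_mono s" "(X \<circ> enumerate S \<circ> s) \<longlonglongrightarrow> L" using assms[OF r(1)] by blast
  then have "eventually (\<lambda>j. dist (X (enumerate S (s j))) L < e) sequentially"
    using e(1) unfolding tendsto_iff by simp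
  then show False using r(2) by (auto simp: not_less[symmetric] dest: eventually_happens)
qed

lemma normalised_limit_abs_eq_1:
  fixes \<nu> :: "nat \<Rightarrow> real"
  assumes "\<And>j. t j = 1 / max 1 \<bar>\<nu> j\<bar>" "t \<longlonglongrightarrow> 0" "(\<lambda>j. t j * \<nu> j) \<longlonglongrightarrow> c"
  shows "\<bar>c\<bar> = 1"
proof -
  have "eventually (\<lambda>j. t j < 1) sequentially" using assms(2) by (simp add: order_tendstoD)
  then have "eventually (\<lambda>j. \<bar>t j * \<nu> j\<bar> = 1) sequentially"
    by (rule eventually_mono) (auto simp: assms(1) abs_mult max_def split: if_splits)
  then show ?thesis using tendsto_unique[OF _ tendsto_rabs[OF assms(3)]] tendsto_eventually by fastforce
qed

lemma eventually_abs_diff_le_linear: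
  assumes "(h has_real_derivative D) (at 0)"
  shows "eventually (\<lambda>t. \<bar>h t - h 0\<bar> \<le> (\<bar>D\<bar> + 1) * \<bar>t\<bar>) (nhds 0)"
proof -
  have "((\<lambda>t. (h t - h 0) / (t - 0)) \<longlongrightarrow> D) (at 0)"
    using assms has_field_derivative_iff by blast
  then have "eventually (\<lambda>t. dist ((h t - h 0) / (t - 0)) D < 1) (at 0)"
    by (rule tendstoD) simp
  then have "eventually (\<lambda>t. t \<noteq> 0 \<longrightarrow> \<bar>(h t - h 0) / t - D\<bar> < 1) (nhds 0)"
    unfolding eventually_at_filter by (simp add: dist_real_def)
  then show ?thesis
  proof (rule eventually_mono)
    fix t :: real assume t: "t \<noteq> 0 \<longrightarrow> \<bar>(h t - h 0) / t - D\<bar> < 1"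
    show "\<bar>h t - h 0\<bar> \<le> (\<bar>D\<bar> + 1) * \<bar>t\<bar>"
    proof (cases "t = 0")
      case False
      then have "\<bar>(h t - h 0) / t\<bar> \<le> \<bar>D\<bar> + 1" using t by linarith
      then have "\<bar>h t - h 0\<bar> / \<bar>t\<bar> \<le> \<bar>D\<bar> + 1" by simp
      then show ?thesis using False by (simp add: divide_le_eq)
    qed simp
  qed
qed

lemma eventually_norm_diff_le_linear:
  fixes h :: "real \<Rightarrow> real^'n::finite"
  assumes "\<And>j. (\<lambda>t. h t $ j) differentiable (at 0)"
  shows "\<exists>M\<ge>0. eventually (\<lambda>t. norm (h t - h 0) \<le> M * \<bar>t\<bar>) (nhds 0)"
proof -
  have "\<exists>D. ((\<lambda>t. h t $ j) has_real_derivative D) (at 0)" for j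
    using assms unfolding real_differentiable_def by blast
  then obtain D where D: "\<And>j. ((\<lambda>t. h t $ j) has_real_derivative D j) (at 0)" by metis
  define M where "M = (\<Sum>j\<in>UNIV. \<bar>D j\<bar> + 1)"
  have "eventually (\<lambda>t. \<forall>j. \<bar>h t $ j - h 0 $ j\<bar> \<le> (\<bar>D j\<bar> + 1) * \<bar>t\<bar>) (nhds 0)"
    by (intro eventually_all_finite eventually_abs_diff_le_linear[OF D])
  then have "eventually (\<lambda>t. norm (h t - h 0) \<le> M * \<bar>t\<bar>) (nhds 0)"
  proof (rule eventually_mono)
    fix t assume "\<forall>j. \<bar>h t $ j - h 0 $ j\<bar> \<le> (\<bar>D j\<bar> + 1) * \<bar>t\<bar>"
    then have "(\<Sum>j\<in>UNIV. \<bar>(h t - h 0) $ j\<bar>) \<le> M * \<bar>t\<bar>"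
      unfolding M_def sum_distrib_right by (intro sum_mono) simp
    then show "norm (h t - h 0) \<le> M * \<bar>t\<bar>" using norm_le_l1_cart[of "h t - h 0"] by linarith
  qed
  moreover have "M \<ge> 0" unfolding M_def by (intro sum_nonneg) simp
  ultimately show ?thesis by auto
qed

lemma eventually_bounded_finite_family:
  fixes g :: "'a \<Rightarrow> real \<Rightarrow> real"
  assumes "finite A" "\<And>\<alpha>. \<alpha> \<in> A \<Longrightarrow> isCont (g \<alpha>) 0"
  shows "\<exists>B\<ge>0. eventually (\<lambda>t. \<forall>\<alpha>\<in>A. \<bar>g \<alpha> t\<bar> \<le> B) (nhds 0)"
proof -
  define B where "B = (\<Sum>\<alpha>\<in>A. \<bar>g \<alpha> 0\<bar> + 1)"
  have each: "eventually (\<lambda>t. \<bar>g \<alpha> t\<bar> \<le> B) (nhds 0)" if "\<alpha> \<in> A" for \<alpha>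
  proof -
    have "eventually (\<lambda>t. dist (g \<alpha> t) (g \<alpha> 0) < 1) (at 0)"
      using assms(2)[OF that] unfolding isCont_def by (rule tendstoD) simp
    then have "eventually (\<lambda>t. \<bar>g \<alpha> t\<bar> \<le> \<bar>g \<alpha> 0\<bar> + 1) (nhds 0)"
      unfolding eventually_at_filter by (rule eventually_mono) (auto simp: dist_real_def)
    moreover have "\<bar>g \<alpha> 0\<bar> + 1 \<le> B" unfolding B_def using assms(1) that by (intro member_le_sum) auto
    ultimately show ?thesis by (auto elim: eventually_mono)
  qed
  have "eventually (\<lambda>t. \<forall>\<alpha>\<in>A. \<bar>g \<alpha> t\<bar> \<le> B) (nhds 0)"
    by (rule eventually_ball_finite[OF assms(1)]) (simp add: each)
  moreover have "B \<ge> 0" unfolding B_def by (intro sum_nonneg) auto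
  ultimately show ?thesis by auto
qed

lemma has_real_derivative_of_sequences:
  fixes g :: "real \<Rightarrow> real"
  assumes "\<delta> > 0"
    and seq: "\<And>T. (\<And>j. T j \<in> ball 0 \<delta> - {0}) \<Longrightarrow> T \<longlonglongrightarrow> 0 \<Longrightarrow>
        \<exists>L. (\<lambda>j. (g (T j) - g 0) / T j) \<longlonglongrightarrow> L \<and> P L"
    and unique: "\<And>L L'. P L \<Longrightarrow> P L' \<Longrightarrow> L = L'"
  shows "\<exists>D. (g has_real_derivative D) (at 0) \<and> P D"
proof -
  define T0 where "T0 j = \<delta> / 2 * inverse (real (Suc j))" for j
  have "T0 j \<in> ball 0 \<delta> - {0}" for j
  proof -
    have "inverse (real (Suc j)) \<le> 1" by (simp add: inverse_le_1_iff)
    then have "\<delta> / 2 * inverse (real (Suc j)) \<le> \<delta> / 2" using \<open>\<delta> > 0\<close> by (intro mult_left_le) auto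
    then show ?thesis using \<open>\<delta> > 0\<close> unfolding T0_def by auto
  qed
  moreover have "T0 \<longlonglongrightarrow> 0"
    unfolding T0_def using tendsto_mult[OF tendsto_const LIMSEQ_inverse_real_of_nat] by simp
  ultimately obtain D where D: "P D" using seq by blast
  have "((\<lambda>t. (g t - g 0) / t) \<longlongrightarrow> D) (at 0 within ball 0 \<delta>)"
    unfolding tendsto_at_iff_sequentially
  proof (intro allI impI)
    fix T :: "nat \<Rightarrow> real" assume "\<forall>j. T j \<in> ball 0 \<delta> - {0}" "T \<longlonglongrightarrow> 0"
    then obtain L where "(\<lambda>j. (g (T j) - g 0) / T j) \<longlonglongrightarrow> L" "P L" using seq by blast
    then show "((\<lambda>t. (g t - g 0) / t) \<circ> T) \<longlonglongrightarrow> D" using unique[OF D] by (simp add: comp_def)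
  qed
  moreover have "at (0::real) within ball 0 \<delta> = at 0" using \<open>\<delta> > 0\<close> by (intro at_within_open) auto
  ultimately have "(g has_real_derivative D) (at 0)" by (simp add: has_field_derivative_iff)
  with D show ?thesis by auto
qed

lemma difference_quotient_LIMSEQ:
  assumes "(h has_real_derivative D) (at 0)" "T \<longlonglongrightarrow> 0" "\<And>j. T j \<noteq> 0"
  shows "(\<lambda>j. (h (T j) - h 0) / T j) \<longlonglongrightarrow> D"
proof -
  have "((\<lambda>t. (h t - h 0) / (t - 0)) \<longlongrightarrow> D) (at 0)"
    using assms(1) has_field_derivative_iff by blast
  then show ?thesis
    using assms(2,3) unfolding tendsto_at_iff_sequentially[where s = UNIV, simplified]
    by (auto simp: comp_def)
qed

lemma power_mult_quotient_le_1:
  fixes N M B c t J :: real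
  assumes "0 \<le> N" "N \<le> M * \<bar>t\<bar>" "M * \<bar>t\<bar> \<le> 1" "1 \<le> q" "\<bar>J\<bar> \<le> B"
    and "0 \<le> M" "0 \<le> c" "c * (M * B) \<le> 1" "t \<noteq> 0"
  shows "N ^ q * \<bar>c / t * J\<bar> \<le> 1"
proof -
  have "N ^ q \<le> (M * \<bar>t\<bar>) ^ q" using assms(1,2) by (intro power_mono)
  also have "\<dots> \<le> M * \<bar>t\<bar>" using assms(3,4,6) power_decreasing[of 1 q "M * \<bar>t\<bar>"] by simp
  finally have "N ^ q \<le> M * \<bar>t\<bar>" .
  moreover have "\<bar>c / t * J\<bar> \<le> c / \<bar>t\<bar> * B"
    using assms(5,7) by (simp add: abs_mult mult_left_mono divide_right_mono)
  ultimately have "N ^ q * \<bar>c / t * J\<bar> \<le> M * \<bar>t\<bar> * (c / \<bar>t\<bar> * B)"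
    using assms(6) by (intro mult_mono) auto
  also have "\<dots> = c * (M * B)" using assms(9) by (simp add: field_simps)
  finally show ?thesis using assms(8) by linarith
qed

section \<open>Partial derivatives and \<open>C\<^sup>k\<close> functions\<close>

lemma eventually_line_in_open:
  fixes x v :: "'a::real_normed_vector"
  assumes "open V" "x \<in> V"
  shows "eventually (\<lambda>t::real. x + t *\<^sub>R v \<in> V) (nhds 0)"
proof -
  obtain e where e: "e > 0" "ball x e \<subseteq> V" using assms open_contains_ball by blast
  have "x + t *\<^sub>R v \<in> V" if "dist t 0 < e / (norm v + 1)" for t :: real
  proof -
    have "\<bar>t\<bar> * (norm v + 1) < e"
      using that by (simp add: pos_less_divide_eq add_nonneg_pos)
    moreover have "norm (t *\<^sub>R v) \<le> \<bar>t\<bar> * (norm v + 1)" by (simp add: mult_left_mono)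
    ultimately show ?thesis using e by (auto simp: dist_norm)
  qed
  moreover have "e / (norm v + 1) > 0" using e by (simp add: add_nonneg_pos)
  ultimately show ?thesis unfolding eventually_nhds_metric by blast
qed

lemma eventually_line_eq:
  fixes x v :: "'a::real_normed_vector"
  assumes "open V" "x \<in> V" "\<And>y. y \<in> V \<Longrightarrow> h y = h' y"
  shows "eventually (\<lambda>t. h (x + t *\<^sub>R v) = h' (x + t *\<^sub>R v)) (nhds 0)"
  using eventually_line_in_open[OF assms(1,2), of v] by (rule eventually_mono) (simp add: assms(3))

lemma partial_cong:
  fixes h h' :: "real^'m::finite \<Rightarrow> real"
  assumes "open V" "x \<in> V" "\<And>y. y \<in> V \<Longrightarrow> h y = h' y"
  shows "partial i h x = partial i h' x"
  unfolding partial_def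
  by (rule deriv_cong_ev[OF eventually_line_eq refl]) (use assms in auto)

lemma differentiable_line_cong:
  fixes x v :: "'a::real_normed_vector" and h h' :: "'a \<Rightarrow> real"
  assumes "open V" "x \<in> V" "\<And>y. y \<in> V \<Longrightarrow> h y = h' y"
    and "(\<lambda>t. h (x + t *\<^sub>R v)) differentiable (at 0)"
  shows "(\<lambda>t. h' (x + t *\<^sub>R v)) differentiable (at 0)"
proof -
  have "eventually (\<lambda>t. h (x + t *\<^sub>R v) = h' (x + t *\<^sub>R v)) (nhds 0)"
    by (rule eventually_line_eq) (use assms in auto)
  then have "((\<lambda>t. h (x + t *\<^sub>R v)) has_real_derivative D) (at 0)
      \<longleftrightarrow> ((\<lambda>t. h' (x + t *\<^sub>R v)) has_real_derivative D) (at 0)" for D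
    by (rule DERIV_cong_ev[OF refl _ refl])
  then show ?thesis using assms(4) unfolding real_differentiable_def by blast
qed

lemma has_real_derivative_partial:
  assumes "(\<lambda>t. h (x + t *\<^sub>R axis i 1)) differentiable (at 0)"
  shows "((\<lambda>t. h (x + t *\<^sub>R axis i 1)) has_real_derivative partial i h x) (at 0)"
  using assms unfolding partial_def real_differentiable_def by (metis DERIV_imp_deriv)

lemma partial_add:
  assumes "(\<lambda>t. h1 (x + t *\<^sub>R axis i 1)) differentiable (at 0)"
    "(\<lambda>t. h2 (x + t *\<^sub>R axis i 1)) differentiable (at 0)"
  shows "partial i (\<lambda>y. h1 y + h2 y) x = partial i h1 x + partial i h2 x"
  unfolding partial_def[of i "\<lambda>y. h1 y + h2 y"]
  by (rule DERIV_imp_deriv)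
    (rule DERIV_add[OF has_real_derivative_partial[OF assms(1)]
        has_real_derivative_partial[OF assms(2)]])

lemma partial_mult:
  assumes "(\<lambda>t. h1 (x + t *\<^sub>R axis i 1)) differentiable (at 0)"
    "(\<lambda>t. h2 (x + t *\<^sub>R axis i 1)) differentiable (at 0)"
  shows "partial i (\<lambda>y. h1 y * h2 y) x = partial i h1 x * h2 x + h1 x * partial i h2 x"
proof -
  have "((\<lambda>t. h1 (x + t *\<^sub>R axis i 1) * h2 (x + t *\<^sub>R axis i 1)) has_real_derivative
      partial i h1 x * h2 (x + 0 *\<^sub>R axis i 1) + partial i h2 x * h1 (x + 0 *\<^sub>R axis i 1)) (at 0)"
    by (rule DERIV_mult[OF has_real_derivative_partial[OF assms(1)]
        has_real_derivative_partial[OF assms(2)]])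
  then show ?thesis
    unfolding partial_def[of i "\<lambda>y. h1 y * h2 y"] by (simp add: DERIV_imp_deriv mult.commute)
qed

lemma partial_const: "partial i (\<lambda>y. c) x = 0"
  unfolding partial_def by (simp add: DERIV_imp_deriv)

lemma Ck_imp_continuous_on: "Ck k V h \<Longrightarrow> continuous_on V h"
  by (cases k) auto

lemma Ck_cong:
  assumes "open V" "Ck k V h" "\<And>x. x \<in> V \<Longrightarrow> h x = h' x"
  shows "Ck k V h'"
  using assms(2,3)
proof (induction k arbitrary: h h')
  case 0
  then show ?case using continuous_on_cong[of V V h h'] by simp
next
  case (Suc k)
  have "Ck k V (partial i h')" for i
  proof (rule Suc.IH)
    show "Ck k V (partial i h)" using Suc.prems(1) by simp
    show "partial i h x = partial i h' x" if "x \<in> V" for x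
      by (rule partial_cong[OF assms(1) that Suc.prems(2)])
  qed
  moreover have "(\<lambda>t. h' (x + t *\<^sub>R axis i 1)) differentiable (at 0)" if "x \<in> V" for i x
    using Suc.prems differentiable_line_cong[OF assms(1) that, of h h'] that by simp
  ultimately show ?case using Suc.prems continuous_on_cong[of V V h h'] by simp
qed

lemma Ck_Suc_imp_Ck: "Ck (Suc k) V h \<Longrightarrow> Ck k V h"
  by (induction k arbitrary: h) simp_all

lemma Ck_le: "Ck k V h \<Longrightarrow> k' \<le> k \<Longrightarrow> Ck k' V h"
  by (induction k) (auto simp: le_Suc_eq Ck_Suc_imp_Ck simp del: Ck.simps)

lemma Ck_const: "Ck k V (\<lambda>x. c)"
proof (induction k arbitrary: c)
  case (Suc k)
  have "Ck k V (partial i (\<lambda>x. c))" for i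
    using Suc.IH[of 0] by (simp add: partial_const[abs_def])
  then show ?case by simp
qed simp

lemma Ck_add:
  assumes "open V" "Ck k V h1" "Ck k V h2"
  shows "Ck k V (\<lambda>x. h1 x + h2 x)"
  using assms(2,3)
proof (induction k arbitrary: h1 h2)
  case 0 then show ?case by (simp add: continuous_on_add)
next
  case (Suc k)
  have "Ck k V (partial i (\<lambda>x. h1 x + h2 x))" for i
  proof (rule Ck_cong[OF assms(1)])
    show "Ck k V (\<lambda>x. partial i h1 x + partial i h2 x)" using Suc by simp
    show "partial i h1 x + partial i h2 x = partial i (\<lambda>x. h1 x + h2 x) x" if "x \<in> V" for x
      using Suc.prems partial_add[of h1 x i h2] that by simp
  qed
  then show ?case using Suc.prems by (auto simp: continuous_on_add intro!: differentiable_add)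
qed

lemma Ck_mult:
  assumes "open V" "Ck k V h1" "Ck k V h2"
  shows "Ck k V (\<lambda>x. h1 x * h2 x)"
  using assms(2,3)
proof (induction k arbitrary: h1 h2)
  case 0 then show ?case by (simp add: continuous_on_mult)
next
  case (Suc k)
  have "Ck k V (partial i (\<lambda>x. h1 x * h2 x))" for i
  proof (rule Ck_cong[OF assms(1)])
    have "Ck k V h1" "Ck k V h2" using Suc.prems Ck_Suc_imp_Ck by blast+
    then show "Ck k V (\<lambda>x. partial i h1 x * h2 x + h1 x * partial i h2 x)"
      using Suc.prems by (auto intro!: Ck_add[OF assms(1)] Suc.IH)
    show "partial i h1 x * h2 x + h1 x * partial i h2 x = partial i (\<lambda>x. h1 x * h2 x) x"
      if "x \<in> V" for x
      using Suc.prems partial_mult[of h1 x i h2] that by simp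
  qed
  then show ?case using Suc.prems by (auto simp: continuous_on_mult intro!: differentiable_mult)
qed

lemma Ck_cmult: "open V \<Longrightarrow> Ck k V h \<Longrightarrow> Ck k V (\<lambda>x. c * h x)"
  using Ck_mult[OF _ Ck_const] by blast

lemma Ck_diff: "open V \<Longrightarrow> Ck k V h1 \<Longrightarrow> Ck k V h2 \<Longrightarrow> Ck k V (\<lambda>x. h1 x - h2 x)"
  using Ck_add[of V k h1 "\<lambda>x. (-1) * h2 x"] Ck_cmult[of V k h2 "-1"] by simp

lemma Ck_sum:
  assumes "open V" "finite B" "\<And>b. b \<in> B \<Longrightarrow> Ck k V (h b)"
  shows "Ck k V (\<lambda>x. \<Sum>b\<in>B. h b x)"
  using assms(2,3)
proof induction
  case (insert b B)
  then have "Ck k V (\<lambda>x. h b x + (\<Sum>b\<in>B. h b x))" by (intro Ck_add[OF assms(1)]) simp_all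
  then show ?case using insert by simp
qed (simp add: Ck_const)

lemma Ck_prod:
  assumes "open V" "finite B" "\<And>b. b \<in> B \<Longrightarrow> Ck k V (h b)"
  shows "Ck k V (\<lambda>x. \<Prod>b\<in>B. h b x)"
  using assms(2,3)
proof induction
  case (insert b B)
  then have "Ck k V (\<lambda>x. h b x * (\<Prod>b\<in>B. h b x))" by (intro Ck_mult[OF assms(1)]) simp_all
  then show ?case using insert by simp
qed (simp add: Ck_const)

lemma Ck_power: "open V \<Longrightarrow> Ck k V h \<Longrightarrow> Ck k V (\<lambda>x. h x ^ e)"
  by (induction e) (simp_all add: Ck_const Ck_mult)

lemma partial_iter_append: "partial_iter (js @ [i]) h = partial_iter js (partial i h)"
  by (induction js) auto

lemma Ck_partial_iter:
  "Ck k V h \<Longrightarrow> length js \<le> k \<Longrightarrow> Ck (k - length js) V (partial_iter js h)"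
proof (induction js)
  case (Cons j js)
  then have "Ck (Suc (k - Suc (length js))) V (partial_iter js h)"
    by (simp add: Suc_diff_Suc)
  then show ?case by simp
qed simp

lemma continuous_on_partial_iter:
  "Ck k V h \<Longrightarrow> length js \<le> k \<Longrightarrow> continuous_on V (partial_iter js h)"
  using Ck_partial_iter Ck_imp_continuous_on by blast

lemma differentiable_partial_iter:
  assumes "Ck k V h" "length js < k" "x \<in> V"
  shows "(\<lambda>t. partial_iter js h (x + t *\<^sub>R axis i 1)) differentiable (at 0)"
proof -
  have "Ck (Suc (k - Suc (length js))) V (partial_iter js h)"
    using Ck_partial_iter[OF assms(1), of js] assms(2) by (simp add: Suc_diff_Suc)
  then show ?thesis using assms(3) by simp
qed

lemma Ck_from_partial_iter:
  assumes "\<And>js. length js \<le> k \<Longrightarrow> continuous_on V (partial_iter js h)"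
    and "\<And>js i x. length js < k \<Longrightarrow> x \<in> V \<Longrightarrow>
           (\<lambda>t. partial_iter js h (x + t *\<^sub>R axis i 1)) differentiable (at 0)"
  shows "Ck k V h"
  using assms
proof (induction k arbitrary: h)
  case 0 then show ?case using 0(1)[of "[]"] by simp
next
  case (Suc k)
  have "Ck k V (partial i h)" for i
    by (rule Suc.IH) (use Suc.prems(1)[of "_ @ [i]"] Suc.prems(2)[of "_ @ [i]"] in
        \<open>simp_all add: partial_iter_append\<close>)
  then show ?case using Suc.prems(1)[of "[]"] Suc.prems(2)[of "[]"] by simp
qed

lemma partial_iter_zero: "partial_iter js (\<lambda>y. 0) = (\<lambda>y. 0)"
  by (induction js) (auto simp: partial_const)

lemma partial_iter_add:
  assumes "open V" "Ck k V h1" "Ck k V h2" "length js \<le> k" "x \<in> V"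
  shows "partial_iter js (\<lambda>y. h1 y + h2 y) x = partial_iter js h1 x + partial_iter js h2 x"
  using assms(4,5)
proof (induction js arbitrary: x)
  case (Cons j js)
  have "partial_iter (j # js) (\<lambda>y. h1 y + h2 y) x
      = partial j (\<lambda>y. partial_iter js h1 y + partial_iter js h2 y) x"
    using Cons partial_cong[OF assms(1) Cons.prems(2), of "partial_iter js (\<lambda>y. h1 y + h2 y)"]
    by simp
  also have "\<dots> = partial_iter (j # js) h1 x + partial_iter (j # js) h2 x"
    using partial_add[of "partial_iter js h1" x j "partial_iter js h2"]
      differentiable_partial_iter[OF assms(2), of js x j]
      differentiable_partial_iter[OF assms(3), of js x j] Cons.prems by simp
  finally show ?case .
qed simp

lemma partial_iter_cmult:
  assumes "open V" "Ck k V h" "length js \<le> k" "x \<in> V"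
  shows "partial_iter js (\<lambda>y. c * h y) x = c * partial_iter js h x"
  using assms(3,4)
proof (induction js arbitrary: x)
  case (Cons j js)
  have "partial_iter (j # js) (\<lambda>y. c * h y) x = partial j (\<lambda>y. c * partial_iter js h y) x"
    using Cons partial_cong[OF assms(1) Cons.prems(2), of "partial_iter js (\<lambda>y. c * h y)"]
    by simp
  also have "\<dots> = c * partial_iter (j # js) h x"
    using partial_mult[of "\<lambda>y. c" x j "partial_iter js h"]
      differentiable_partial_iter[OF assms(2), of js x j] Cons.prems
    by (simp add: partial_const)
  finally show ?case .
qed simp

lemma partial_iter_sum:
  assumes "open V" "finite B" "\<And>b. b \<in> B \<Longrightarrow> Ck k V (h b)" "length js \<le> k" "x \<in> V"
  shows "partial_iter js (\<lambda>y. \<Sum>b\<in>B. c b * h b y) x = (\<Sum>b\<in>B. c b * partial_iter js (h b) x)"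
  using assms(2,3)
proof (induction B rule: finite_induct)
  case empty then show ?case by (simp add: partial_iter_zero)
next
  case (insert b B)
  have "partial_iter js (\<lambda>y. c b * h b y + (\<Sum>b\<in>B. c b * h b y)) x
      = partial_iter js (\<lambda>y. c b * h b y) x + partial_iter js (\<lambda>y. \<Sum>b\<in>B. c b * h b y) x"
    by (rule partial_iter_add[OF assms(1) _ _ assms(4,5)])
      (use insert in \<open>auto intro!: Ck_cmult[OF assms(1)] Ck_sum[OF assms(1)]\<close>)
  then show ?case using insert partial_iter_cmult[OF assms(1) _ assms(4,5)] by simp
qed

lemma partial_iter_diff:
  assumes "open V" "Ck k V h1" "Ck k V h2" "length js \<le> k" "x \<in> V"
  shows "partial_iter js (\<lambda>y. h1 y - h2 y) x = partial_iter js h1 x - partial_iter js h2 x"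
  using partial_iter_add[OF assms(1,2) Ck_cmult[OF assms(1,3), of "-1"] assms(4,5)]
    partial_iter_cmult[OF assms(1,3,4,5), of "-1"] by simp

section \<open>Vanishing to a given order\<close>

text \<open>A certificate that \<open>h\<close> vanishes to order \<open>N\<close> at \<open>z\<close>: up to equality on \<open>V\<close>, \<open>h\<close> is a
  sum of products of \<open>C\<^sup>k\<close> functions in which \<open>N\<close> factors vanish at \<open>z\<close>.\<close>

inductive vanishes_to_order :: "(real^'m::finite) set \<Rightarrow> real^'m \<Rightarrow> nat \<Rightarrow> nat \<Rightarrow> (real^'m \<Rightarrow> real) \<Rightarrow> bool"
  for V z where
  Ck: "Ck k V h \<Longrightarrow> vanishes_to_order V z 0 k h"
| factor: "Ck k V u \<Longrightarrow> u z = 0 \<Longrightarrow> vanishes_to_order V z N k h \<Longrightarrow>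
    vanishes_to_order V z (Suc N) k (\<lambda>w. u w * h w)"
| mult: "Ck k V v \<Longrightarrow> vanishes_to_order V z N k h \<Longrightarrow> vanishes_to_order V z N k (\<lambda>w. v w * h w)"
| add: "vanishes_to_order V z N k h1 \<Longrightarrow> vanishes_to_order V z N k h2 \<Longrightarrow>
    vanishes_to_order V z N k (\<lambda>w. h1 w + h2 w)"
| cong: "vanishes_to_order V z N k h \<Longrightarrow> (\<And>w. w \<in> V \<Longrightarrow> h w = h' w) \<Longrightarrow> vanishes_to_order V z N k h'"

context
  fixes V :: "(real^'m::finite) set" and z
  assumes open_V: "open V" and z_in_V: "z \<in> V"
begin

lemma vanishes_to_order_imp_Ck: "vanishes_to_order V z N k h \<Longrightarrow> Ck k V h"
  by (induction rule: vanishes_to_order.induct)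
    (auto intro: Ck_mult[OF open_V] Ck_add[OF open_V] Ck_cong[OF open_V])

lemma vanishes_to_order_at: "vanishes_to_order V z N k h \<Longrightarrow> 0 < N \<Longrightarrow> h z = 0"
  by (induction rule: vanishes_to_order.induct) (use z_in_V in \<open>auto simp del: mult_eq_0_iff\<close>)

lemma vanishes_to_order_pred: "vanishes_to_order V z N k h \<Longrightarrow> vanishes_to_order V z (N - 1) k h"
proof (induction rule: vanishes_to_order.induct)
  case (factor k u N h)
  then show ?case by (simp add: vanishes_to_order.mult)
qed (auto intro: vanishes_to_order.intros)

lemma vanishes_to_order_le_Ck:
  "vanishes_to_order V z N k h \<Longrightarrow> k' \<le> k \<Longrightarrow> vanishes_to_order V z N k' h"
  by (induction rule: vanishes_to_order.induct) (auto intro: vanishes_to_order.intros Ck_le)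

lemma vanishes_to_order_mult:
  "vanishes_to_order V z N1 k h1 \<Longrightarrow> vanishes_to_order V z N2 k h2 \<Longrightarrow>
    vanishes_to_order V z (N1 + N2) k (\<lambda>w. h1 w * h2 w)"
proof (induction rule: vanishes_to_order.induct)
  case (Ck k h)
  then show ?case by (simp add: vanishes_to_order.mult)
next
  case (factor k u N h)
  then have "vanishes_to_order V z (Suc N + N2) k (\<lambda>w. u w * (h w * h2 w))"
    by (simp add: vanishes_to_order.factor)
  then show ?case by (rule vanishes_to_order.cong) (simp add: mult.assoc)
next
  case (mult k v N h)
  then have "vanishes_to_order V z (N + N2) k (\<lambda>w. v w * (h w * h2 w))"
    by (simp add: vanishes_to_order.mult)
  then show ?case by (rule vanishes_to_order.cong) (simp add: mult.assoc)
next
  case (add N k h1 h1')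
  then have "vanishes_to_order V z (N + N2) k (\<lambda>w. h1 w * h2 w + h1' w * h2 w)"
    by (simp add: vanishes_to_order.add)
  then show ?case by (rule vanishes_to_order.cong) (simp add: distrib_right)
qed (auto intro: vanishes_to_order.cong)

lemma vanishes_to_order_partial_mult:
  assumes "Ck (Suc k) V v" "Ck (Suc k) V h"
    and "vanishes_to_order V z M k (\<lambda>w. partial i v w * h w)"
    and "vanishes_to_order V z M k (\<lambda>w. v w * partial i h w)"
  shows "vanishes_to_order V z M k (partial i (\<lambda>w. v w * h w))"
proof -
  have "partial i v w * h w + v w * partial i h w = partial i (\<lambda>w. v w * h w) w" if "w \<in> V" for w
    using partial_mult[of v w i h] assms(1,2) that by simp
  then show ?thesis
    using vanishes_to_order.add[OF assms(3,4)] by (blast intro: vanishes_to_order.cong)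
qed

lemma vanishes_to_order_partial:
  "vanishes_to_order V z N (Suc k) h \<Longrightarrow> vanishes_to_order V z (N - 1) k (partial i h)"
proof (induction N "Suc k" h arbitrary: k rule: vanishes_to_order.induct)
  case (Ck h)
  then show ?case by (simp add: vanishes_to_order.Ck)
next
  case (factor u N h)
  have h: "Ck (Suc k) V h" "vanishes_to_order V z N k h"
    using vanishes_to_order_imp_Ck[OF factor(3)] vanishes_to_order_le_Ck[OF factor(3)] by auto
  have "vanishes_to_order V z N k (\<lambda>w. u w * partial i h w)"
    using factor Ck_Suc_imp_Ck
    by (cases N) (auto intro: vanishes_to_order.factor vanishes_to_order.mult)
  then show ?case
    using factor(1) h by (auto intro!: vanishes_to_order_partial_mult vanishes_to_order.mult)
next
  case (mult v N h)
  have h: "Ck (Suc k) V h" "vanishes_to_order V z (N - 1) k h"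
    using vanishes_to_order_imp_Ck[OF mult(2)] vanishes_to_order_pred[OF mult(2)]
      vanishes_to_order_le_Ck by auto
  show ?case
    using mult Ck_Suc_imp_Ck h
    by (auto intro!: vanishes_to_order_partial_mult vanishes_to_order.mult)
next
  case (add N h1 h2)
  have "Ck (Suc k) V h1" "Ck (Suc k) V h2" using add(1,3) vanishes_to_order_imp_Ck by blast+
  then have "partial i h1 w + partial i h2 w = partial i (\<lambda>w. h1 w + h2 w) w" if "w \<in> V" for w
    using partial_add[of h1 w i h2] that by simp
  then show ?case using vanishes_to_order.add[OF add(2) add(4)] by (auto intro: vanishes_to_order.cong)
next
  case (cong N h h')
  then show ?case using partial_cong[OF open_V _ cong(3)] by (auto intro: vanishes_to_order.cong)
qed

lemma partial_iter_vanishes_at: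
  assumes "vanishes_to_order V z N k h" "length js \<le> k" "length js < N"
  shows "partial_iter js h z = 0"
proof -
  have "vanishes_to_order V z (N - length js) (k - length js) (partial_iter js h)"
    using assms(2)
  proof (induction js)
    case (Cons j js)
    then have "vanishes_to_order V z (N - length js) (Suc (k - Suc (length js))) (partial_iter js h)"
      by (simp add: Suc_diff_Suc)
    then show ?case using vanishes_to_order_partial by fastforce
  qed (simp add: assms(1))
  then show ?thesis using vanishes_to_order_at assms(3) by simp
qed

lemma vanishes_to_order_power:
  "Ck k V u \<Longrightarrow> u z = 0 \<Longrightarrow> vanishes_to_order V z e k (\<lambda>w. u w ^ e)"
  by (induction e) (auto intro: vanishes_to_order.Ck Ck_const vanishes_to_order.factor)

lemma vanishes_to_order_prod:
  assumes "finite I" "\<And>i. i \<in> I \<Longrightarrow> vanishes_to_order V z (N i) k (h i)"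
  shows "vanishes_to_order V z (\<Sum>i\<in>I. N i) k (\<lambda>w. \<Prod>i\<in>I. h i w)"
  using assms
proof (induction I rule: finite_induct)
  case empty then show ?case using vanishes_to_order.Ck[OF Ck_const[of k V 1]] by simp
next
  case (insert i I)
  then show ?case using vanishes_to_order_mult[of "N i" k "h i"] by simp
qed

end

section \<open>Jets of pullbacks of polynomials\<close>

lemma MI_subset_PiE: "MI p \<subseteq> Pi\<^sub>E UNIV (\<lambda>i. {..p})"
proof
  fix \<alpha> :: "'n::finite \<Rightarrow> nat" assume "\<alpha> \<in> MI p"
  then have "mi_abs \<alpha> \<le> p" by (simp add: MI_def)
  then have "\<alpha> i \<le> p" for i
    unfolding mi_abs_def using member_le_sum[of i UNIV \<alpha>] by simp
  then show "\<alpha> \<in> Pi\<^sub>E UNIV (\<lambda>i. {..p})" by (auto simp: PiE_def Pi_def extensional_def)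
qed

lemma finite_MI: "finite (MI p :: ('n::finite \<Rightarrow> nat) set)"
  by (rule finite_subset[OF MI_subset_PiE]) (intro finite_PiE; simp)

lemma card_MI_ge: "p + 1 \<le> card (MI p :: ('n::finite \<Rightarrow> nat) set)"
proof -
  fix i0 :: 'n
  define g where "g k = (\<lambda>i. if i = i0 then k else (0::nat))" for k
  have inj: "inj_on g {..p}" unfolding inj_on_def g_def by (metis (full_types))
  have "mi_abs (g k) = k" for k
    unfolding mi_abs_def g_def by simp
  then have "g ` {..p} \<subseteq> MI p" by (auto simp: MI_def)
  then have "card (g ` {..p}) \<le> card (MI p :: ('n \<Rightarrow> nat) set)" using finite_MI card_mono by blast
  then show ?thesis using card_image[OF inj] by simp
qed

lemma jet_eq_sum: "jet p \<xi> \<alpha> b = (\<Sum>\<beta>\<in>MI p. shifted_mono_coeff \<alpha> b \<beta> * \<xi> \<beta>)"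
  by (simp add: jet_def dual_ev_def)

lemma jet_cmult: "jet p (\<lambda>\<beta>. t * \<xi> \<beta>) \<alpha> b = t * jet p \<xi> \<alpha> b"
  by (simp add: jet_eq_sum sum_distrib_left algebra_simps)

lemma jet_zero: "jet p (\<lambda>\<beta>. 0) \<alpha> b = 0"
  by (simp add: jet_eq_sum)

lemma mi_fact_pos: "mi_fact \<alpha> > 0"
  unfolding mi_fact_def by (intro prod_pos) simp

lemma shifted_mono_expansion:
  fixes \<alpha> :: "'n::finite \<Rightarrow> nat"
  assumes "\<alpha> \<in> MI p"
  shows "(\<Sum>\<beta>\<in>MI p. shifted_mono_coeff \<alpha> b \<beta> * mono \<beta> y)
    = (\<Prod>i\<in>UNIV. (y$i - b$i) ^ \<alpha> i) / mi_fact \<alpha>"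
proof -
  define A where "A = Pi\<^sub>E UNIV (\<lambda>i. {..\<alpha> i})"
  have A_iff: "\<beta> \<in> A \<longleftrightarrow> (\<forall>i. \<beta> i \<le> \<alpha> i)" for \<beta>
    by (auto simp: A_def PiE_def extensional_def)
  have "A \<subseteq> MI p"
  proof
    fix \<beta> assume "\<beta> \<in> A"
    then have "mi_abs \<beta> \<le> mi_abs \<alpha>" unfolding mi_abs_def A_iff by (intro sum_mono) auto
    then show "\<beta> \<in> MI p" using assms by (simp add: MI_def)
  qed
  then have "(\<Sum>\<beta>\<in>MI p. shifted_mono_coeff \<alpha> b \<beta> * mono \<beta> y)
      = (\<Sum>\<beta>\<in>A. shifted_mono_coeff \<alpha> b \<beta> * mono \<beta> y)"
    by (intro sum.mono_neutral_right[OF finite_MI]) (auto simp: shifted_mono_coeff_def A_iff)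
  also have "\<dots> = (\<Sum>\<beta>\<in>A. \<Prod>i\<in>UNIV. real (\<alpha> i choose \<beta> i) * y$i ^ \<beta> i * (- b$i) ^ (\<alpha> i - \<beta> i))
      / mi_fact \<alpha>"
    unfolding sum_divide_distrib
    by (rule sum.cong)
      (auto simp: shifted_mono_coeff_def A_iff mono_def prod.distrib[symmetric] ac_simps)
  also have "(\<Sum>\<beta>\<in>A. \<Prod>i\<in>UNIV. real (\<alpha> i choose \<beta> i) * y$i ^ \<beta> i * (- b$i) ^ (\<alpha> i - \<beta> i))
      = (\<Prod>i\<in>UNIV. \<Sum>k\<le>\<alpha> i. real (\<alpha> i choose k) * y$i ^ k * (- b$i) ^ (\<alpha> i - k))"
    unfolding A_def by (rule prod_sum_PiE[symmetric]) auto
  also have "\<dots> = (\<Prod>i\<in>UNIV. (y$i - b$i) ^ \<alpha> i)"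
    by (simp add: binomial_ring[symmetric])
  finally show ?thesis .
qed

lemma continuous_on_shifted_mono_coeff:
  assumes "continuous_on V \<phi>"
  shows "continuous_on V (\<lambda>z. shifted_mono_coeff \<alpha> (\<phi> z) \<beta>)"
proof (cases "\<forall>i. \<beta> i \<le> \<alpha> i")
  case True
  then show ?thesis
    using assms mi_fact_pos[of \<alpha>] unfolding shifted_mono_coeff_def
    by (simp, intro continuous_intros) auto
next
  case False
  then show ?thesis unfolding shifted_mono_coeff_def if_not_P[OF False] by simp
qed

lemma Ck_map_imp_continuous_on: "Ck_map k V \<phi> \<Longrightarrow> continuous_on V \<phi>"
  unfolding Ck_map_def using continuous_on_vec_lambda[of V "\<lambda>i x. \<phi> x $ i"] Ck_imp_continuous_on
  by auto

lemma Ck_mono_comp: "open V \<Longrightarrow> Ck_map k V \<phi> \<Longrightarrow> Ck k V (\<lambda>z. mono \<beta> (\<phi> z))"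
  unfolding mono_def Ck_map_def by (intro Ck_prod Ck_power) auto

text \<open>The functional \<open>P \<mapsto> \<partial>\<^sub>j\<^sub>s (P \<circ> \<phi>) (y)\<close> on \<open>P\<^sub>p\<close>, in the monomial coordinates of \<open>dual_ev\<close>.\<close>

definition pullback_functional ::
    "nat \<Rightarrow> (real^'m::finite \<Rightarrow> real^'n::finite) \<Rightarrow> 'm list \<Rightarrow> real^'m \<Rightarrow> ('n \<Rightarrow> nat) \<Rightarrow> real" where
  "pullback_functional p \<phi> js y =
     (\<lambda>\<beta>. if \<beta> \<in> MI p then partial_iter js (\<lambda>z. mono \<beta> (\<phi> z)) y else 0)"

lemma pullback_functional_Nil: "pullback_functional p \<phi> [] y = delta p (\<phi> y)"
  by (simp add: pullback_functional_def delta_def fun_eq_iff)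

context
  fixes V :: "(real^'m::finite) set" and \<phi> :: "real^'m \<Rightarrow> real^'n::finite" and p :: nat
  assumes open_V: "open V" and Ck_\<phi>: "Ck_map p V \<phi>"
begin

lemma partial_iter_poly_comp:
  assumes "length js \<le> p" "y \<in> V"
  shows "partial_iter js (\<lambda>z. \<Sum>\<beta>\<in>MI p. c \<beta> * mono \<beta> (\<phi> z)) y
    = (\<Sum>\<beta>\<in>MI p. c \<beta> * pullback_functional p \<phi> js y \<beta>)"
  using partial_iter_sum[OF open_V finite_MI Ck_mono_comp[OF open_V Ck_\<phi>] assms]
  by (simp add: pullback_functional_def)

lemma continuous_on_pullback_functional:
  "length js \<le> p \<Longrightarrow> continuous_on V (\<lambda>z. pullback_functional p \<phi> js z \<beta>)"
  unfolding pullback_functional_def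
  by (cases "\<beta> \<in> MI p") (auto intro: continuous_on_partial_iter[OF Ck_mono_comp[OF open_V Ck_\<phi>]])

lemma continuous_on_jet_pullback_functional:
  "length js \<le> p \<Longrightarrow> continuous_on V (\<lambda>z. jet p (pullback_functional p \<phi> js z) \<alpha> (\<phi> z))"
  unfolding jet_eq_sum
  by (intro continuous_on_sum continuous_on_mult continuous_on_shifted_mono_coeff
      Ck_map_imp_continuous_on[OF Ck_\<phi>] continuous_on_pullback_functional)

text \<open>The jet of order \<open>p\<close> of the functional is \<open>\<partial>\<^sub>j\<^sub>s\<close> of \<open>(\<phi> - \<phi> z)\<^sup>\<alpha> / \<alpha>!\<close> at \<open>z\<close>,
  which vanishes when fewer than \<open>|\<alpha>|\<close> derivatives are taken.\<close>

lemma jet_pullback_functional_top_order: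
  assumes "z \<in> V" "mi_abs \<alpha> = p" "length js < p"
  shows "jet p (pullback_functional p \<phi> js z) \<alpha> (\<phi> z) = 0"
proof -
  have "\<alpha> \<in> MI p" using assms(2) by (simp add: MI_def)
  have "vanishes_to_order V z (\<Sum>i\<in>UNIV. \<alpha> i) p (\<lambda>w. \<Prod>i\<in>UNIV. (\<phi> w $ i - \<phi> z $ i) ^ \<alpha> i)"
    using Ck_\<phi> unfolding Ck_map_def
    by (intro vanishes_to_order_prod[OF open_V assms(1)] vanishes_to_order_power[OF open_V assms(1)])
      (auto intro!: Ck_diff[OF open_V] Ck_const)
  then have "vanishes_to_order V z p p
      (\<lambda>w. (1 / mi_fact \<alpha>) * (\<Prod>i\<in>UNIV. (\<phi> w $ i - \<phi> z $ i) ^ \<alpha> i))"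
    using assms(2) vanishes_to_order.mult[OF Ck_const] unfolding mi_abs_def by blast
  then have "partial_iter js (\<lambda>w. \<Sum>\<beta>\<in>MI p. shifted_mono_coeff \<alpha> (\<phi> z) \<beta> * mono \<beta> (\<phi> w)) z = 0"
    using partial_iter_vanishes_at[OF open_V assms(1)] assms(3)
    by (simp add: shifted_mono_expansion[OF \<open>\<alpha> \<in> MI p\<close>])
  then show ?thesis
    using partial_iter_poly_comp[of js z "\<lambda>\<beta>. shifted_mono_coeff \<alpha> (\<phi> z) \<beta>"] assms
    by (simp add: jet_eq_sum)
qed

lemma pullback_functional_difference_quotient:
  assumes "length js < p" "x \<in> V" "T \<longlonglongrightarrow> 0" "\<And>j. T j \<noteq> 0"
  shows "(\<lambda>j \<beta>. (pullback_functional p \<phi> js (x + T j *\<^sub>R axis i 1) \<beta>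
      - pullback_functional p \<phi> js x \<beta>) / T j)
    \<longlonglongrightarrow> pullback_functional p \<phi> (i # js) x"
  unfolding tendsto_fun_iff_pointwise
proof
  fix \<beta> :: "'n \<Rightarrow> nat"
  define h where "h t = partial_iter js (\<lambda>z. mono \<beta> (\<phi> z)) (x + t *\<^sub>R axis i 1)" for t
  have "(h has_real_derivative partial i (partial_iter js (\<lambda>z. mono \<beta> (\<phi> z))) x) (at 0)"
    unfolding h_def
    by (intro has_real_derivative_partial
        differentiable_partial_iter[OF Ck_mono_comp[OF open_V Ck_\<phi>] assms(1,2)])
  then have "(\<lambda>j. (h (T j) - h 0) / T j) \<longlonglongrightarrow> partial i (partial_iter js (\<lambda>z. mono \<beta> (\<phi> z))) x"
    using assms(3,4) by (rule difference_quotient_LIMSEQ)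
  then show "(\<lambda>j. (pullback_functional p \<phi> js (x + T j *\<^sub>R axis i 1) \<beta>
      - pullback_functional p \<phi> js x \<beta>) / T j)
      \<longlonglongrightarrow> pullback_functional p \<phi> (i # js) x \<beta>"
    unfolding pullback_functional_def h_def by simp
qed

lemma eventually_norm_line_diff_le:
  assumes "0 < p" "x \<in> V"
  shows "\<exists>M\<ge>0. eventually (\<lambda>t. norm (\<phi> (x + t *\<^sub>R axis i 1) - \<phi> x) \<le> M * \<bar>t\<bar>) (nhds 0)"
proof -
  have "p = Suc (p - 1)" using assms(1) by simp
  then have "Ck (Suc (p - 1)) V (\<lambda>y. \<phi> y $ j)" for j using Ck_\<phi> unfolding Ck_map_def by metis
  then have "(\<lambda>t. \<phi> (x + t *\<^sub>R axis i 1) $ j) differentiable (at 0)" for j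
    using assms(2) by simp
  then show ?thesis using eventually_norm_diff_le_linear[of "\<lambda>t. \<phi> (x + t *\<^sub>R axis i 1)"] by simp
qed

lemma eventually_jet_pullback_functional_bounded:
  assumes "length js \<le> p" "x \<in> V"
  shows "\<exists>B\<ge>0. eventually (\<lambda>t. \<forall>\<alpha>\<in>MI p.
    \<bar>jet p (pullback_functional p \<phi> js (x + t *\<^sub>R v)) \<alpha> (\<phi> (x + t *\<^sub>R v))\<bar> \<le> B) (nhds 0)"
proof (rule eventually_bounded_finite_family[OF finite_MI])
  fix \<alpha> :: "'n \<Rightarrow> nat"
  have "isCont (\<lambda>z. jet p (pullback_functional p \<phi> js z) \<alpha> (\<phi> z)) (x + 0 *\<^sub>R v)"
    using continuous_on_jet_pullback_functional[OF assms(1)] open_V assms(2)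
      continuous_on_eq_continuous_at by auto
  moreover have "isCont (\<lambda>t::real. x + t *\<^sub>R v) 0" by (intro continuous_intros)
  ultimately show "isCont (\<lambda>t. jet p (pullback_functional p \<phi> js (x + t *\<^sub>R v)) \<alpha> (\<phi> (x + t *\<^sub>R v))) 0"
    using continuous_at_compose[of 0 "\<lambda>t. x + t *\<^sub>R v"] unfolding comp_def by auto
qed

text \<open>With \<open>\<eta>\<^sub>t = (c/t) \<Psi>(x + t e)\<close>, the jets of order \<open>p\<close> vanish, and every lower-order jet is
  \<open>O(1/|t|)\<close> while \<open>|\<phi> x - \<phi>(x + t e)|\<close> is \<open>O(|t|)\<close>: so a small \<open>c\<close> keeps the pairs in \<open>\<Delta>\<close>.\<close>

lemma difference_quotient_Delta_bound:
  assumes "length js < p" "x \<in> V"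
  obtains c \<delta> where "c > 0" "\<delta> > 0"
    "\<And>t. \<bar>t\<bar> < \<delta> \<Longrightarrow> x + t *\<^sub>R axis i 1 \<in> V"
    "\<And>t \<alpha>. t \<noteq> 0 \<Longrightarrow> \<bar>t\<bar> < \<delta> \<Longrightarrow> \<alpha> \<in> MI p \<Longrightarrow>
       norm (\<phi> x - \<phi> (x + t *\<^sub>R axis i 1)) ^ (p - mi_abs \<alpha>) *
       \<bar>jet p (\<lambda>\<beta>. c / t * pullback_functional p \<phi> js (x + t *\<^sub>R axis i 1) \<beta>) \<alpha>
         (\<phi> (x + t *\<^sub>R axis i 1))\<bar> \<le> 1"
proof -
  define e :: "real^'m" where "e = axis i 1"
  define J where "J \<alpha> t = jet p (pullback_functional p \<phi> js (x + t *\<^sub>R e)) \<alpha> (\<phi> (x + t *\<^sub>R e))" for \<alpha> t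
  obtain M where M: "M \<ge> 0" "eventually (\<lambda>t. norm (\<phi> (x + t *\<^sub>R e) - \<phi> x) \<le> M * \<bar>t\<bar>) (nhds 0)"
    using eventually_norm_line_diff_le[of x i] assms unfolding e_def by auto
  obtain B where B: "B \<ge> 0" "eventually (\<lambda>t. \<forall>\<alpha>\<in>MI p. \<bar>J \<alpha> t\<bar> \<le> B) (nhds 0)"
    using eventually_jet_pullback_functional_bounded[of js x e] assms unfolding J_def by auto
  have small: "eventually (\<lambda>t::real. M * \<bar>t\<bar> < 1) (nhds 0)"
    by (rule order_tendstoD(2)) (auto intro!: tendsto_eq_intros filterlim_ident)
  then obtain \<delta> where "\<delta> > 0" and \<delta>: "\<And>t. \<bar>t\<bar> < \<delta> \<Longrightarrow> norm (\<phi> (x + t *\<^sub>R e) - \<phi> x) \<le> M * \<bar>t\<bar>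
      \<and> (\<forall>\<alpha>\<in>MI p. \<bar>J \<alpha> t\<bar> \<le> B) \<and> x + t *\<^sub>R e \<in> V \<and> M * \<bar>t\<bar> < 1"
    using eventually_conj[OF M(2) eventually_conj[OF B(2)
        eventually_conj[OF eventually_line_in_open[OF open_V assms(2), of e] small]]]
    unfolding eventually_nhds_metric dist_real_def by auto
  define c where "c = 1 / (M * B + 1)"
  have "M * B \<ge> 0" using M(1) B(1) by simp
  then have c: "c > 0" "c * (M * B) \<le> 1" unfolding c_def by (simp_all add: add_nonneg_pos divide_le_eq)
  show ?thesis
  proof (rule that[OF c(1) \<open>\<delta> > 0\<close>])
    show "x + t *\<^sub>R axis i 1 \<in> V" if "\<bar>t\<bar> < \<delta>" for t using \<delta>[OF that] e_def by simp
    fix t :: real and \<alpha> :: "'n \<Rightarrow> nat" assume t: "t \<noteq> 0" "\<bar>t\<bar> < \<delta>" and \<alpha>: "\<alpha> \<in> MI p"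
    have J: "jet p (\<lambda>\<beta>. c / t * pullback_functional p \<phi> js (x + t *\<^sub>R e) \<beta>) \<alpha> (\<phi> (x + t *\<^sub>R e))
        = c / t * J \<alpha> t"
      unfolding J_def by (rule jet_cmult)
    show "norm (\<phi> x - \<phi> (x + t *\<^sub>R axis i 1)) ^ (p - mi_abs \<alpha>) *
       \<bar>jet p (\<lambda>\<beta>. c / t * pullback_functional p \<phi> js (x + t *\<^sub>R axis i 1) \<beta>) \<alpha>
         (\<phi> (x + t *\<^sub>R axis i 1))\<bar> \<le> 1"
    proof (cases "mi_abs \<alpha> = p")
      case True
      then show ?thesis
        using jet_pullback_functional_top_order[OF _ True assms(1)] \<delta>[OF t(2)] J
        unfolding J_def e_def by simp
    next
      case False
      then have "1 \<le> p - mi_abs \<alpha>" using \<alpha> by (simp add: MI_def)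
      then have "norm (\<phi> x - \<phi> (x + t *\<^sub>R e)) ^ (p - mi_abs \<alpha>) * \<bar>c / t * J \<alpha> t\<bar> \<le> 1"
        using \<delta>[OF t(2)] \<alpha> M(1) c t(1)
        by (intro power_mult_quotient_le_1[where M = M and B = B]) (auto simp: norm_minus_commute)
      then show ?thesis using J unfolding e_def by simp
    qed
  qed
qed

end

section \<open>Graphs of linear functionals\<close>

lemma lin_span2_lincomb:
  assumes "u \<in> lin_span2 S" "v \<in> lin_span2 S"
  shows "((\<lambda>x. r * fst u x + s * fst v x), r * snd u + s * snd v) \<in> lin_span2 S"
proof -
  obtain F c where F: "finite F" "F \<subseteq> S" "u = ((\<lambda>x. \<Sum>w\<in>F. c w * fst w x), (\<Sum>w\<in>F. c w * snd w))"
    using assms(1) unfolding lin_span2_def by blast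
  obtain G d where G: "finite G" "G \<subseteq> S" "v = ((\<lambda>x. \<Sum>w\<in>G. d w * fst w x), (\<Sum>w\<in>G. d w * snd w))"
    using assms(2) unfolding lin_span2_def by blast
  define e where "e w = r * (if w \<in> F then c w else 0) + s * (if w \<in> G then d w else 0)" for w
  have "(\<Sum>w\<in>F \<union> G. e w * g w) = r * (\<Sum>w\<in>F. c w * g w) + s * (\<Sum>w\<in>G. d w * g w)"
    for g :: "_ \<Rightarrow> real"
  proof -
    have "(\<Sum>w\<in>F \<union> G. (if w \<in> F then c w else 0) * g w) = (\<Sum>w\<in>F. (if w \<in> F then c w else 0) * g w)"
      "(\<Sum>w\<in>F \<union> G. (if w \<in> G then d w else 0) * g w) = (\<Sum>w\<in>G. (if w \<in> G then d w else 0) * g w)"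
      using F G by (intro sum.mono_neutral_right; auto)+
    moreover have "(\<Sum>w\<in>F \<union> G. e w * g w)
        = r * (\<Sum>w\<in>F \<union> G. (if w \<in> F then c w else 0) * g w)
          + s * (\<Sum>w\<in>F \<union> G. (if w \<in> G then d w else 0) * g w)"
      unfolding e_def by (simp add: sum.distrib sum_distrib_left distrib_right mult.assoc)
    ultimately show ?thesis by (simp add: if_distrib cong: if_cong)
  qed
  then show ?thesis
    unfolding lin_span2_def using F G by (intro CollectI exI[of _ "F \<union> G"] exI[of _ e]) auto
qed

lemma lin_span2_superset: "v \<in> S \<Longrightarrow> v \<in> lin_span2 S"
  unfolding lin_span2_def by (intro CollectI exI[of _ "{v}"] exI[of _ "\<lambda>_. 1"]) simp

lemma zero_in_lin_span2: "((\<lambda>x. 0), 0) \<in> lin_span2 S"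
  unfolding lin_span2_def by (intro CollectI exI[of _ "{}"]) simp

lemma graph_coefficients_insert:
  fixes S :: "(('a \<Rightarrow> real) \<times> real) set"
  assumes lin: "\<And>u v r s. u \<in> S \<Longrightarrow> v \<in> S \<Longrightarrow> ((\<lambda>x. r * fst u x + s * fst v x), r * snd u + s * snd v) \<in> S"
    and w: "w \<in> S" "fst w d = 1" and "finite D" "d \<notin> D"
    and c: "\<And>u. u \<in> S \<Longrightarrow> fst u d = 0 \<Longrightarrow> (\<Sum>x\<in>D. c x * fst u x) = snd u"
  shows "\<forall>u\<in>S. (\<Sum>x\<in>insert d D. (c(d := snd w - (\<Sum>x\<in>D. c x * fst w x))) x * fst u x) = snd u"
proof
  fix u assume "u \<in> S"
  text \<open>Subtracting a multiple of \<open>w\<close> reduces \<open>u\<close> to an element vanishing at \<open>d\<close>.\<close>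
  have "(\<Sum>x\<in>D. c x * fst u x) - fst u d * (\<Sum>x\<in>D. c x * fst w x) = snd u - fst u d * snd w"
    using c[of "((\<lambda>x. fst u x - fst u d * fst w x), snd u - fst u d * snd w)"]
      lin[OF \<open>u \<in> S\<close> w(1), of 1 "- fst u d"] w(2)
    by (simp add: algebra_simps sum_subtractf sum_distrib_left)
  moreover have "(\<Sum>x\<in>D. (c(d := snd w - (\<Sum>x\<in>D. c x * fst w x))) x * fst u x) = (\<Sum>x\<in>D. c x * fst u x)"
    using \<open>d \<notin> D\<close> by (intro sum.cong) auto
  ultimately show "(\<Sum>x\<in>insert d D. (c(d := snd w - (\<Sum>x\<in>D. c x * fst w x))) x * fst u x) = snd u"
    using \<open>finite D\<close> \<open>d \<notin> D\<close> by (simp add: algebra_simps)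
qed

lemma linear_graph_coefficients:
  fixes S :: "(('a \<Rightarrow> real) \<times> real) set"
  assumes "finite D"
    and lin: "\<And>u v r s. u \<in> S \<Longrightarrow> v \<in> S \<Longrightarrow> ((\<lambda>x. r * fst u x + s * fst v x), r * snd u + s * snd v) \<in> S"
    and graph: "\<And>u. u \<in> S \<Longrightarrow> fst u = (\<lambda>_. 0) \<Longrightarrow> snd u = 0"
    and supp: "\<And>u x. u \<in> S \<Longrightarrow> x \<notin> D \<Longrightarrow> fst u x = 0"
  shows "\<exists>c. \<forall>u\<in>S. (\<Sum>x\<in>D. c x * fst u x) = snd u"
  using assms
proof (induction D arbitrary: S rule: finite_induct)
  case empty
  have "snd u = 0" if "u \<in> S" for u
    using empty.prems(2)[OF that] empty.prems(3)[OF that] by (simp add: fun_eq_iff)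
  then show ?case by simp
next
  case (insert d D)
  define S' where "S' = {u \<in> S. fst u d = 0}"
  have "\<exists>c. \<forall>u\<in>S'. (\<Sum>x\<in>D. c x * fst u x) = snd u"
  proof (rule insert.IH)
    show "((\<lambda>x. r * fst u x + s * fst v x), r * snd u + s * snd v) \<in> S'"
      if "u \<in> S'" "v \<in> S'" for u v r s using that insert.prems(1) unfolding S'_def by auto
    show "snd u = 0" if "u \<in> S'" "fst u = (\<lambda>_. 0)" for u
      using that insert.prems(2) unfolding S'_def by auto
    show "fst u x = 0" if "u \<in> S'" "x \<notin> D" for u x
      using that insert.prems(3) unfolding S'_def by (cases "x = d") auto
  qed
  then obtain c where "\<forall>u\<in>S'. (\<Sum>x\<in>D. c x * fst u x) = snd u" by blast
  then have c: "\<And>u. u \<in> S \<Longrightarrow> fst u d = 0 \<Longrightarrow> (\<Sum>x\<in>D. c x * fst u x) = snd u"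
    unfolding S'_def by blast
  show ?case
  proof (cases "\<exists>w\<in>S. fst w d \<noteq> 0")
    case False
    then show ?thesis using c insert.hyps by (intro exI[of _ c]) auto
  next
    case True
    then obtain w0 where "w0 \<in> S" "fst w0 d \<noteq> 0" by blast
    define w where "w = ((\<lambda>x. fst w0 x / fst w0 d), snd w0 / fst w0 d)"
    have w: "w \<in> S" "fst w d = 1"
      using insert.prems(1)[OF \<open>w0 \<in> S\<close> \<open>w0 \<in> S\<close>, of "1 / fst w0 d" 0] \<open>fst w0 d \<noteq> 0\<close>
      unfolding w_def by simp_all
    show ?thesis
      by (rule exI, rule graph_coefficients_insert[OF _ w insert.hyps(1,2)])
        (fact insert.prems(1), fact c)
  qed
qed

section \<open>The stages of \<open>\<nabla>\<^sup>pf\<close>\<close>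

lemma DeltaPhiI:
  assumes "a \<in> X" "b \<in> X" "(a, \<xi>, l) \<in> \<Phi>" "(b, \<eta>, \<mu>) \<in> \<Phi>"
    and "\<And>\<alpha>. \<alpha> \<in> MI p \<Longrightarrow> norm (a - b) ^ (p - mi_abs \<alpha>) * \<bar>jet p \<eta> \<alpha> b\<bar> \<le> 1"
  shows "(a, b, \<lambda>\<alpha>. \<xi> \<alpha> + \<eta> \<alpha>, l + \<mu>) \<in> DeltaPhi p X \<Phi>"
  unfolding DeltaPhi_def using assms by blast

definition nabla_stage :: "nat \<Rightarrow> (real^'n::finite) set \<Rightarrow> (real^'n \<Rightarrow> real) \<Rightarrow> nat
    \<Rightarrow> ((real^'n) \<times> (('n \<Rightarrow> nat) \<Rightarrow> real) \<times> real) set" where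
  "nabla_stage p X f k = (rhoPhi p X ^^ k) (Phi0 p X f)"

definition nabla_depth :: "nat \<Rightarrow> 'n::finite itself \<Rightarrow> nat" where
  "nabla_depth p T = 2 * (dimP p T + 1)"

lemma nabla_eq_nabla_stage:
  fixes X :: "(real^'n::finite) set"
  shows "nabla p X f = nabla_stage p X f (nabla_depth p TYPE('n::finite))"
  by (simp add: nabla_def nabla_stage_def nabla_depth_def)

lemma nabla_stage_Suc: "nabla_stage p X f (Suc k) = rhoPhi p X (nabla_stage p X f k)"
  by (simp add: nabla_stage_def)

lemma Suc_le_nabla_depth: "k \<le> p \<Longrightarrow> Suc k \<le> nabla_depth p TYPE('n::finite)"
  using card_MI_ge[where 'n = 'n, of p] by (simp add: nabla_depth_def dimP_def)

context
  fixes p :: nat and X :: "(real^'n::finite) set" and f :: "real^'n \<Rightarrow> real"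
begin

lemma nabla_stage_in_X: "(a, \<xi>, l) \<in> nabla_stage p X f k \<Longrightarrow> a \<in> X"
  by (cases k) (auto simp: nabla_stage_def Phi0_def rhoPhi_def)

lemma zero_in_nabla_stage: "a \<in> X \<Longrightarrow> (a, \<lambda>_. 0, 0) \<in> nabla_stage p X f k"
  by (cases k) (auto simp: nabla_stage_def Phi0_def rhoPhi_def zero_in_lin_span2 intro!: exI[of _ 0])

lemma nabla_stage_lincomb:
  assumes "(a, \<xi>1, l1) \<in> nabla_stage p X f k" "(a, \<xi>2, l2) \<in> nabla_stage p X f k"
  shows "(a, \<lambda>\<beta>. r1 * \<xi>1 \<beta> + r2 * \<xi>2 \<beta>, r1 * l1 + r2 * l2) \<in> nabla_stage p X f k"
proof (cases k)
  case 0
  then obtain m1 m2 where "\<xi>1 = (\<lambda>\<alpha>. m1 * delta p a \<alpha>)" "l1 = m1 * f a"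
    "\<xi>2 = (\<lambda>\<alpha>. m2 * delta p a \<alpha>)" "l2 = m2 * f a" "a \<in> X"
    using assms unfolding nabla_stage_def Phi0_def by auto
  then show ?thesis
    using 0 unfolding nabla_stage_def Phi0_def
    by (auto intro!: exI[of _ "r1 * m1 + r2 * m2"] simp: algebra_simps)
next
  case (Suc k')
  then show ?thesis
    using assms lin_span2_lincomb[of "(\<xi>1, l1)" _ "(\<xi>2, l2)" r1 r2]
    by (auto simp: nabla_stage_Suc rhoPhi_def)
qed

lemma nabla_stage_cmult:
  "(a, \<xi>, l) \<in> nabla_stage p X f k \<Longrightarrow> (a, \<lambda>\<beta>. t * \<xi> \<beta>, t * l) \<in> nabla_stage p X f k"
  using nabla_stage_lincomb[of a \<xi> l k \<xi> l t 0] by simp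

lemma diagonal_in_DeltaPhi:
  assumes "(a, \<xi>, l) \<in> nabla_stage p X f k"
  shows "(a, a, \<xi>, l) \<in> DeltaPhi p X (nabla_stage p X f k)"
proof -
  have a: "a \<in> X" using nabla_stage_in_X[OF assms] .
  have "(a, a, \<lambda>\<alpha>. \<xi> \<alpha> + 0, l + 0) \<in> DeltaPhi p X (nabla_stage p X f k)"
    by (rule DeltaPhiI[OF a a assms zero_in_nabla_stage[OF a]]) (simp add: jet_zero)
  then show ?thesis by simp
qed

lemma nabla_stage_subset_Suc:
  assumes "(a, \<xi>, l) \<in> nabla_stage p X f k"
  shows "(a, \<xi>, l) \<in> nabla_stage p X f (Suc k)"
proof -
  have a: "a \<in> X" using nabla_stage_in_X[OF assms] .
  then have "(a, \<xi>, l) \<in> primePhi p X (nabla_stage p X f k)"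
    unfolding primePhi_def using diagonal_in_DeltaPhi[OF assms] closure_subset by blast
  then show ?thesis
    unfolding nabla_stage_Suc rhoPhi_def using a by (auto intro: lin_span2_superset)
qed

lemma nabla_stage_mono:
  "k \<le> k' \<Longrightarrow> (a, \<xi>, l) \<in> nabla_stage p X f k \<Longrightarrow> (a, \<xi>, l) \<in> nabla_stage p X f k'"
  by (induction k' rule: dec_induct) (auto intro: nabla_stage_subset_Suc)

lemma zero_in_tau: "a \<in> X \<Longrightarrow> (a, \<lambda>_. 0) \<in> tau p X"
proof -
  assume a: "a \<in> X"
  obtain m where m: "2 * dimP p TYPE('n) = Suc m"
    using card_MI_ge[where 'n = 'n, of p] unfolding dimP_def by (metis Suc_pred mult_pos_pos pos2
      add_gr_0 less_le_trans zero_less_one)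
  have "(\<lambda>_. 0) \<in> lin_span S" for S :: "(('n \<Rightarrow> nat) \<Rightarrow> real) set"
    unfolding lin_span_def by (intro CollectI exI[of _ "{}"]) simp
  then show ?thesis unfolding tau_def m using a by (simp add: rhoE_def)
qed


lemma DeltaPhi_nabla_stage_cmult:
  assumes "(a, b, \<zeta>, \<nu>) \<in> DeltaPhi p X (nabla_stage p X f k)" "0 \<le> t" "t \<le> 1"
  shows "(a, b, \<lambda>\<beta>. t * \<zeta> \<beta>, t * \<nu>) \<in> DeltaPhi p X (nabla_stage p X f k)"
proof -
  obtain \<xi> l \<eta> \<mu> where \<xi>\<eta>: "(a, \<xi>, l) \<in> nabla_stage p X f k" "(b, \<eta>, \<mu>) \<in> nabla_stage p X f k"
    "\<zeta> = (\<lambda>\<alpha>. \<xi> \<alpha> + \<eta> \<alpha>)" "\<nu> = l + \<mu>"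
    and bound: "\<forall>\<alpha>\<in>MI p. norm (a - b) ^ (p - mi_abs \<alpha>) * \<bar>jet p \<eta> \<alpha> b\<bar> \<le> 1"
    and "a \<in> X" "b \<in> X"
    using assms(1) unfolding DeltaPhi_def by blast
  have "norm (a - b) ^ (p - mi_abs \<alpha>) * \<bar>jet p (\<lambda>\<beta>. t * \<eta> \<beta>) \<alpha> b\<bar> \<le> 1" if "\<alpha> \<in> MI p" for \<alpha>
  proof -
    have "norm (a - b) ^ (p - mi_abs \<alpha>) * \<bar>jet p (\<lambda>\<beta>. t * \<eta> \<beta>) \<alpha> b\<bar>
        = t * (norm (a - b) ^ (p - mi_abs \<alpha>) * \<bar>jet p \<eta> \<alpha> b\<bar>)"
      using assms(2) by (simp add: jet_cmult abs_mult)
    also have "\<dots> \<le> 1 * 1" using bound that assms(2,3) by (intro mult_mono) auto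
    finally show ?thesis by simp
  qed
  then have "(a, b, \<lambda>\<beta>. t * \<xi> \<beta> + t * \<eta> \<beta>, t * l + t * \<mu>) \<in> DeltaPhi p X (nabla_stage p X f k)"
    using \<open>a \<in> X\<close> \<open>b \<in> X\<close> \<xi>\<eta>(1,2) by (intro DeltaPhiI nabla_stage_cmult)
  then show ?thesis using \<xi>\<eta>(3,4) by (simp add: algebra_simps)
qed

lemma nabla_stage_Suc_of_limit:
  assumes "a \<in> X" "\<And>j. (as j, bs j, \<zeta>s j, \<nu>s j) \<in> DeltaPhi p X (nabla_stage p X f k)"
    and "as \<longlonglongrightarrow> a" "bs \<longlonglongrightarrow> a" "\<zeta>s \<longlonglongrightarrow> \<zeta>" "\<nu>s \<longlonglongrightarrow> \<nu>"
  shows "(a, \<zeta>, \<nu>) \<in> nabla_stage p X f (Suc k)"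
proof -
  have "(\<lambda>j. (as j, bs j, \<zeta>s j, \<nu>s j)) \<longlonglongrightarrow> (a, a, \<zeta>, \<nu>)"
    using assms(3-6) by (intro tendsto_Pair)
  then have "(a, a, \<zeta>, \<nu>) \<in> closure (DeltaPhi p X (nabla_stage p X f k))"
    unfolding closure_sequential using assms(2) by (intro exI[of _ "\<lambda>j. (as j, bs j, \<zeta>s j, \<nu>s j)"]) auto
  then show ?thesis
    unfolding nabla_stage_Suc rhoPhi_def primePhi_def using assms(1) by (auto intro: lin_span2_superset)
qed

context
  assumes nabla_fun: "nabla_is_function p X f"
begin

text \<open>Stages up to the depth lie in \<open>\<nabla>\<^sup>pf\<close>, which is single-valued over \<open>(a, 0) \<in> \<tau>\<^sup>p(X)\<close>.\<close>

lemma nabla_stage_value_zero: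
  assumes "k \<le> nabla_depth p TYPE('n)" "(a, \<lambda>_. 0, l) \<in> nabla_stage p X f k"
  shows "l = 0"
proof -
  have a: "a \<in> X" using nabla_stage_in_X assms(2) by blast
  have "(a, \<lambda>_. 0, l) \<in> nabla p X f" "(a, \<lambda>_. 0, 0) \<in> nabla p X f"
    using nabla_stage_mono[OF assms] zero_in_nabla_stage[OF a] by (simp_all add: nabla_eq_nabla_stage)
  then show ?thesis using nabla_fun zero_in_tau[OF a] unfolding nabla_is_function_def by blast
qed

lemma nabla_stage_value_unique:
  assumes "k \<le> nabla_depth p TYPE('n)"
    and "(a, \<xi>, l1) \<in> nabla_stage p X f k" "(a, \<xi>, l2) \<in> nabla_stage p X f k"
  shows "l1 = l2"
proof -
  have "(a, \<lambda>_. 0, l1 - l2) \<in> nabla_stage p X f k"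
    using nabla_stage_lincomb[OF assms(2,3), of 1 "-1"] by simp
  then show ?thesis using nabla_stage_value_zero[OF assms(1)] by fastforce
qed


text \<open>Normalising by \<open>t\<^sub>j = 1 / max 1 |\<nu>\<^sub>j|\<close> makes the values bounded. A subsequence of the
  normalised data converges, and its limit lies in the next stage; if \<open>t\<^sub>j \<rightarrow> 0\<close> that limit
  would be a nonzero value over the zero functional.\<close>

lemma nabla_stage_Suc_subseq_limit:
  assumes "Suc k \<le> nabla_depth p TYPE('n)" "a \<in> X"
    and Delta: "\<And>j. (as j, bs j, \<zeta>s j, \<nu>s j) \<in> DeltaPhi p X (nabla_stage p X f k)"
    and lim: "as \<longlonglongrightarrow> a" "bs \<longlonglongrightarrow> a" "\<zeta>s \<longlonglongrightarrow> \<zeta>"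
  shows "\<exists>r L. strict_mono r \<and> (\<nu>s \<circ> r) \<longlonglongrightarrow> L \<and> (a, \<zeta>, L) \<in> nabla_stage p X f (Suc k)"
proof -
  define t where "t j = 1 / max 1 \<bar>\<nu>s j\<bar>" for j
  have t: "0 < t j" "t j \<le> 1" "\<bar>t j * \<nu>s j\<bar> \<le> 1" for j
    unfolding t_def by (auto simp: abs_mult divide_le_eq_1 less_max_iff_disj)
  have "norm (t j, t j * \<nu>s j) \<le> 2" for j
    using norm_Pair_le[of "t j" "t j * \<nu>s j"] t[of j] by simp
  then have "bounded (range (\<lambda>j. (t j, t j * \<nu>s j)))"
    unfolding bounded_iff by blast
  then obtain l r where r: "strict_mono r" "((\<lambda>j. (t j, t j * \<nu>s j)) \<circ> r) \<longlonglongrightarrow> l"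
    using bounded_imp_convergent_subsequence by blast
  define t0 c0 where "t0 = fst l" and "c0 = snd l"
  have t0: "(\<lambda>j. t (r j)) \<longlonglongrightarrow> t0" and c0: "(\<lambda>j. t (r j) * \<nu>s (r j)) \<longlonglongrightarrow> c0"
    using tendsto_fst[OF r(2)] tendsto_snd[OF r(2)] by (simp_all add: t0_def c0_def comp_def)
  have "(\<lambda>j \<beta>. t (r j) * \<zeta>s (r j) \<beta>) \<longlonglongrightarrow> (\<lambda>\<beta>. t0 * \<zeta> \<beta>)"
    using LIMSEQ_subseq_LIMSEQ[OF lim(3) r(1)] t0
    unfolding tendsto_fun_iff_pointwise by (auto simp: comp_def intro: tendsto_mult)
  then have in_stage: "(a, \<lambda>\<beta>. t0 * \<zeta> \<beta>, c0) \<in> nabla_stage p X f (Suc k)"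
    using Delta DeltaPhi_nabla_stage_cmult t(1,2) r(1) c0
      LIMSEQ_subseq_LIMSEQ[OF lim(1) r(1)] LIMSEQ_subseq_LIMSEQ[OF lim(2) r(1)]
    by (intro nabla_stage_Suc_of_limit[OF \<open>a \<in> X\<close>, where as = "\<lambda>j. as (r j)" and bs = "\<lambda>j. bs (r j)"])
      (auto simp: comp_def less_imp_le)
  have "t0 \<noteq> 0"
  proof
    assume "t0 = 0"
    then have "c0 = 0" using in_stage nabla_stage_value_zero[OF assms(1)] by simp
    have t_lim: "(\<lambda>j. t (r j)) \<longlonglongrightarrow> 0" using t0 \<open>t0 = 0\<close> by simp
    have "\<bar>c0\<bar> = 1" by (rule normalised_limit_abs_eq_1[OF _ t_lim c0]) (simp add: t_def)
    then show False using \<open>c0 = 0\<close> by simp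
  qed
  moreover have "t0 \<ge> 0" using t0 t(1) by (auto intro: LIMSEQ_le_const less_imp_le)
  ultimately have "(\<lambda>j. t (r j) * \<nu>s (r j) / t (r j)) \<longlonglongrightarrow> c0 / t0"
    using t0 c0 by (intro tendsto_divide) auto
  moreover have "t (r j) * \<nu>s (r j) / t (r j) = (\<nu>s \<circ> r) j" for j
    using t(1)[of "r j"] by simp
  ultimately have "(\<nu>s \<circ> r) \<longlonglongrightarrow> c0 / t0" by (simp add: comp_def)
  moreover have "(a, \<zeta>, c0 / t0) \<in> nabla_stage p X f (Suc k)"
    using nabla_stage_cmult[OF in_stage, of "1 / t0"] \<open>t0 \<noteq> 0\<close> by simp
  ultimately show ?thesis using r(1) by blast
qed

lemma nabla_stage_Suc_limit:
  assumes "Suc k \<le> nabla_depth p TYPE('n)" "a \<in> X"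
    and Delta: "\<And>j. (as j, bs j, \<zeta>s j, \<nu>s j) \<in> DeltaPhi p X (nabla_stage p X f k)"
    and lim: "as \<longlonglongrightarrow> a" "bs \<longlonglongrightarrow> a" "\<zeta>s \<longlonglongrightarrow> \<zeta>"
  shows "\<exists>L. \<nu>s \<longlonglongrightarrow> L \<and> (a, \<zeta>, L) \<in> nabla_stage p X f (Suc k)"
proof -
  obtain L where L: "(a, \<zeta>, L) \<in> nabla_stage p X f (Suc k)"
    using nabla_stage_Suc_subseq_limit[OF assms] by blast
  have "\<exists>s. strict_mono s \<and> (\<nu>s \<circ> r \<circ> s) \<longlonglongrightarrow> L" if r: "strict_mono r" for r :: "nat \<Rightarrow> nat"
  proof -
    have "((as \<circ> r) j, (bs \<circ> r) j, (\<zeta>s \<circ> r) j, (\<nu>s \<circ> r) j) \<in> DeltaPhi p X (nabla_stage p X f k)" for j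
      using Delta by simp
    then obtain s L' where "strict_mono s" "(\<nu>s \<circ> r \<circ> s) \<longlonglongrightarrow> L'" "(a, \<zeta>, L') \<in> nabla_stage p X f (Suc k)"
      using nabla_stage_Suc_subseq_limit[OF assms(1,2) _ lim[THEN LIMSEQ_subseq_LIMSEQ, OF r]] by blast
    then show ?thesis using nabla_stage_value_unique[OF assms(1) _ L] by blast
  qed
  then show ?thesis using LIMSEQ_by_subsequences L by blast
qed

end

end

section \<open>Composites with a \<open>C\<^sup>p\<close> map\<close>

context
  fixes p :: nat and V :: "(real^'m::finite) set" and \<phi> :: "real^'m \<Rightarrow> real^'n::finite"
    and X :: "(real^'n) set" and f :: "real^'n \<Rightarrow> real"
  assumes open_V: "open V" and Ck_\<phi>: "Ck_map p V \<phi>" and \<phi>_V: "\<phi> ` V \<subseteq> X"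
    and nabla_fun: "nabla_is_function p X f"
begin

lemma continuous_on_partial_iter_comp:
  assumes "length js \<le> p"
    and stage: "\<And>y. y \<in> V \<Longrightarrow> (\<phi> y, pullback_functional p \<phi> js y, partial_iter js (f \<circ> \<phi>) y)
      \<in> nabla_stage p X f (length js)"
  shows "continuous_on V (partial_iter js (f \<circ> \<phi>))"
  unfolding continuous_on_sequentially
proof (intro allI ballI impI, elim conjE)
  fix ys y assume y: "y \<in> V" and ys: "\<forall>n. ys n \<in> V" "ys \<longlonglongrightarrow> y"
  define G where "G = partial_iter js (f \<circ> \<phi>)"
  define \<Psi> where "\<Psi> = pullback_functional p \<phi> js"
  have depth: "Suc (length js) \<le> nabla_depth p TYPE('n)" using Suc_le_nabla_depth assms(1) .
  have lim_\<phi>: "(\<lambda>j. \<phi> (ys j)) \<longlonglongrightarrow> \<phi> y"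
    using continuous_on_tendsto_compose[OF Ck_map_imp_continuous_on[OF Ck_\<phi>] ys(2) y] ys(1)
    by (simp add: comp_def)
  have lim_\<Psi>: "(\<lambda>j. \<Psi> (ys j)) \<longlonglongrightarrow> \<Psi> y"
    unfolding tendsto_fun_iff_pointwise \<Psi>_def
    using continuous_on_tendsto_compose[OF continuous_on_pullback_functional[OF open_V Ck_\<phi> assms(1)]
        ys(2) y]
      ys(1) by (simp add: comp_def)
  have Delta: "(\<phi> (ys j), \<phi> (ys j), \<Psi> (ys j), G (ys j)) \<in> DeltaPhi p X (nabla_stage p X f (length js))"
    for j unfolding G_def \<Psi>_def using ys(1) by (intro diagonal_in_DeltaPhi stage) simp
  have "\<phi> y \<in> X" using \<phi>_V y by blast
  obtain L where L: "(\<lambda>j. G (ys j)) \<longlonglongrightarrow> L" "(\<phi> y, \<Psi> y, L) \<in> nabla_stage p X f (Suc (length js))"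
    using nabla_stage_Suc_limit[OF nabla_fun depth \<open>\<phi> y \<in> X\<close> Delta lim_\<phi> lim_\<phi> lim_\<Psi>] by blast
  moreover have "(\<phi> y, \<Psi> y, G y) \<in> nabla_stage p X f (Suc (length js))"
    unfolding G_def \<Psi>_def by (intro nabla_stage_subset_Suc stage y)
  ultimately have "L = G y" using nabla_stage_value_unique[OF nabla_fun depth] by blast
  then show "(partial_iter js (f \<circ> \<phi>) \<circ> ys) \<longlonglongrightarrow> partial_iter js (f \<circ> \<phi>) y"
    using L(1) unfolding G_def by (simp add: comp_def)
qed

lemma scaled_difference_quotient_limit:
  assumes "length js < p" "x \<in> V"
    and stage: "\<And>y. y \<in> V \<Longrightarrow> (\<phi> y, pullback_functional p \<phi> js y, partial_iter js (f \<circ> \<phi>) y)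
      \<in> nabla_stage p X f (length js)"
    and T: "T \<longlonglongrightarrow> 0" "\<And>j. T j \<noteq> 0" "\<And>j. x + T j *\<^sub>R axis i 1 \<in> V"
    and bound: "\<And>j \<alpha>. \<alpha> \<in> MI p \<Longrightarrow> norm (\<phi> x - \<phi> (x + T j *\<^sub>R axis i 1)) ^ (p - mi_abs \<alpha>) *
       \<bar>jet p (\<lambda>\<beta>. c / T j * pullback_functional p \<phi> js (x + T j *\<^sub>R axis i 1) \<beta>) \<alpha>
         (\<phi> (x + T j *\<^sub>R axis i 1))\<bar> \<le> 1"
  shows "\<exists>L. (\<lambda>j. (c * partial_iter js (f \<circ> \<phi>) (x + T j *\<^sub>R axis i 1)
      - c * partial_iter js (f \<circ> \<phi>) x) / T j) \<longlonglongrightarrow> L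
      \<and> (\<phi> x, \<lambda>\<beta>. c * pullback_functional p \<phi> (i # js) x \<beta>, L) \<in> nabla_stage p X f (Suc (length js))"
proof -
  define G where "G = partial_iter js (f \<circ> \<phi>)"
  define \<Psi> where "\<Psi> = pullback_functional p \<phi> js"
  define y where "y j = x + T j *\<^sub>R axis i 1" for j
  have Delta: "(\<phi> x, \<phi> (y j), \<lambda>\<beta>. - c / T j * \<Psi> x \<beta> + c / T j * \<Psi> (y j) \<beta>,
      - c / T j * G x + c / T j * G (y j))
      \<in> DeltaPhi p X (nabla_stage p X f (length js))" for j
    using \<phi>_V assms(2) T(3) bound unfolding y_def G_def \<Psi>_def
    by (intro DeltaPhiI nabla_stage_cmult stage) auto
  have "\<phi> x \<in> X" using \<phi>_V assms(2) by blast
  have lim_\<phi>: "(\<lambda>j. \<phi> (y j)) \<longlonglongrightarrow> \<phi> x"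
  proof -
    have "y \<longlonglongrightarrow> x"
      unfolding y_def using tendsto_add[OF tendsto_const tendsto_scaleR[OF T(1) tendsto_const]] by simp
    moreover have "eventually (\<lambda>j. y j \<in> V) sequentially" unfolding y_def using T(3) by simp
    ultimately show ?thesis
      by (rule continuous_on_tendsto_compose[OF Ck_map_imp_continuous_on[OF Ck_\<phi>] _ assms(2)])
  qed
  have lim_\<Psi>: "(\<lambda>j \<beta>. - c / T j * \<Psi> x \<beta> + c / T j * \<Psi> (y j) \<beta>)
      \<longlonglongrightarrow> (\<lambda>\<beta>. c * pullback_functional p \<phi> (i # js) x \<beta>)"
  proof -
    have "(\<lambda>j \<beta>. (\<Psi> (y j) \<beta> - \<Psi> x \<beta>) / T j) \<longlonglongrightarrow> pullback_functional p \<phi> (i # js) x"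
      unfolding y_def \<Psi>_def
      by (rule pullback_functional_difference_quotient[OF open_V Ck_\<phi> assms(1,2) T(1,2)])
    then have "(\<lambda>j. c * ((\<Psi> (y j) \<beta> - \<Psi> x \<beta>) / T j)) \<longlonglongrightarrow> c * pullback_functional p \<phi> (i # js) x \<beta>"
      for \<beta> unfolding tendsto_fun_iff_pointwise by (intro tendsto_mult_left) simp
    moreover have "- c / T j * \<Psi> x \<beta> + c / T j * \<Psi> (y j) \<beta> = c * ((\<Psi> (y j) \<beta> - \<Psi> x \<beta>) / T j)"
      for j \<beta> using T(2)[of j] by (simp add: field_simps)
    ultimately show ?thesis unfolding tendsto_fun_iff_pointwise by simp
  qed
  obtain L where "(\<lambda>j. - c / T j * G x + c / T j * G (y j)) \<longlonglongrightarrow> L"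
      "(\<phi> x, \<lambda>\<beta>. c * pullback_functional p \<phi> (i # js) x \<beta>, L) \<in> nabla_stage p X f (Suc (length js))"
    using nabla_stage_Suc_limit[OF nabla_fun Suc_le_nabla_depth[OF less_imp_le[OF assms(1)]]
        \<open>\<phi> x \<in> X\<close> Delta tendsto_const lim_\<phi> lim_\<Psi>] by blast
  moreover have "- c / T j * G x + c / T j * G (y j) = (c * G (y j) - c * G x) / T j" for j
    using T(2)[of j] by (simp add: field_simps)
  ultimately show ?thesis unfolding G_def y_def by auto
qed

lemma has_real_derivative_partial_iter_comp:
  assumes "length js < p" "x \<in> V"
    and stage: "\<And>y. y \<in> V \<Longrightarrow> (\<phi> y, pullback_functional p \<phi> js y, partial_iter js (f \<circ> \<phi>) y)
      \<in> nabla_stage p X f (length js)"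
  shows "\<exists>D. ((\<lambda>t. partial_iter js (f \<circ> \<phi>) (x + t *\<^sub>R axis i 1)) has_real_derivative D) (at 0)
    \<and> (\<phi> x, pullback_functional p \<phi> (i # js) x, D) \<in> nabla_stage p X f (Suc (length js))"
proof -
  define G where "G t = partial_iter js (f \<circ> \<phi>) (x + t *\<^sub>R axis i 1)" for t
  obtain c \<delta> where "c > 0" "\<delta> > 0"
    and in_V: "\<And>t. \<bar>t\<bar> < \<delta> \<Longrightarrow> x + t *\<^sub>R axis i 1 \<in> V"
    and bound: "\<And>t \<alpha>. t \<noteq> 0 \<Longrightarrow> \<bar>t\<bar> < \<delta> \<Longrightarrow> \<alpha> \<in> MI p \<Longrightarrow>
       norm (\<phi> x - \<phi> (x + t *\<^sub>R axis i 1)) ^ (p - mi_abs \<alpha>) *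
       \<bar>jet p (\<lambda>\<beta>. c / t * pullback_functional p \<phi> js (x + t *\<^sub>R axis i 1) \<beta>) \<alpha>
         (\<phi> (x + t *\<^sub>R axis i 1))\<bar> \<le> 1"
    using difference_quotient_Delta_bound[OF open_V Ck_\<phi> assms(1,2)] by blast
  have "\<exists>D. ((\<lambda>t. c * G t) has_real_derivative D) (at 0)
      \<and> (\<phi> x, \<lambda>\<beta>. c * pullback_functional p \<phi> (i # js) x \<beta>, D) \<in> nabla_stage p X f (Suc (length js))"
  proof (rule has_real_derivative_of_sequences[OF \<open>\<delta> > 0\<close>])
    fix T :: "nat \<Rightarrow> real" assume "\<And>j. T j \<in> ball 0 \<delta> - {0}" "T \<longlonglongrightarrow> 0"
    then show "\<exists>L. (\<lambda>j. (c * G (T j) - c * G 0) / T j) \<longlonglongrightarrow> L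
        \<and> (\<phi> x, \<lambda>\<beta>. c * pullback_functional p \<phi> (i # js) x \<beta>, L) \<in> nabla_stage p X f (Suc (length js))"
      unfolding G_def
      using scaled_difference_quotient_limit[OF assms(1,2) stage, of T i c]
        in_V bound by simp
  next
    fix L L'
    assume "(\<phi> x, \<lambda>\<beta>. c * pullback_functional p \<phi> (i # js) x \<beta>, L) \<in> nabla_stage p X f (Suc (length js))"
      and "(\<phi> x, \<lambda>\<beta>. c * pullback_functional p \<phi> (i # js) x \<beta>, L') \<in> nabla_stage p X f (Suc (length js))"
    then show "L = L'"
      by (rule nabla_stage_value_unique[OF nabla_fun Suc_le_nabla_depth[OF less_imp_le[OF assms(1)]]])
  qed
  then obtain D where D: "((\<lambda>t. c * G t) has_real_derivative D) (at 0)"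
    "(\<phi> x, \<lambda>\<beta>. c * pullback_functional p \<phi> (i # js) x \<beta>, D) \<in> nabla_stage p X f (Suc (length js))"
    by blast
  have "(G has_real_derivative D / c) (at 0)"
    using DERIV_cmult[OF D(1), of "1 / c"] \<open>c > 0\<close> by simp
  moreover have "(\<phi> x, pullback_functional p \<phi> (i # js) x, D / c) \<in> nabla_stage p X f (Suc (length js))"
    using nabla_stage_cmult[OF D(2), of "1 / c"] \<open>c > 0\<close> by simp
  ultimately show ?thesis unfolding G_def by blast
qed

lemma pullback_functional_in_nabla_stage:
  "length js \<le> p \<Longrightarrow> y \<in> V \<Longrightarrow>
    (\<phi> y, pullback_functional p \<phi> js y, partial_iter js (f \<circ> \<phi>) y) \<in> nabla_stage p X f (length js)"
proof (induction js arbitrary: y)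
  case Nil
  then have "(\<phi> y, \<lambda>\<alpha>. 1 * delta p (\<phi> y) \<alpha>, 1 * f (\<phi> y)) \<in> Phi0 p X f"
    using \<phi>_V unfolding Phi0_def by blast
  then show ?case by (simp add: nabla_stage_def pullback_functional_Nil)
next
  case (Cons i js)
  have stage: "\<And>z. z \<in> V \<Longrightarrow>
      (\<phi> z, pullback_functional p \<phi> js z, partial_iter js (f \<circ> \<phi>) z) \<in> nabla_stage p X f (length js)"
    using Cons.prems(1) by (auto intro: Cons.IH)
  obtain D where D: "((\<lambda>t. partial_iter js (f \<circ> \<phi>) (y + t *\<^sub>R axis i 1)) has_real_derivative D) (at 0)"
    "(\<phi> y, pullback_functional p \<phi> (i # js) y, D) \<in> nabla_stage p X f (Suc (length js))"
    using has_real_derivative_partial_iter_comp[OF _ Cons.prems(2) stage] Cons.prems(1) by auto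
  have "partial_iter (i # js) (f \<circ> \<phi>) y = D" using D(1) by (simp add: partial_def DERIV_imp_deriv)
  then show ?case using D(2) by (simp only: length_Cons)
qed

lemma Ck_comp: "Ck p V (f \<circ> \<phi>)"
proof (rule Ck_from_partial_iter)
  show "continuous_on V (partial_iter js (f \<circ> \<phi>))" if "length js \<le> p" for js
    using continuous_on_partial_iter_comp[OF that]
      pullback_functional_in_nabla_stage that by blast
  show "(\<lambda>t. partial_iter js (f \<circ> \<phi>) (y + t *\<^sub>R axis i 1)) differentiable (at 0)"
    if "length js < p" "y \<in> V" for js i y
    using has_real_derivative_partial_iter_comp[OF that] pullback_functional_in_nabla_stage that
    unfolding real_differentiable_def by (meson less_imp_le)
qed

text \<open>The pairs \<open>(\<xi>, \<lambda>)\<close> of the top stage over \<open>a\<close> form the graph of a linear functional on \<open>P\<^sub>p\<^sup>*\<close>,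
  i.e. of evaluation at some \<open>P \<in> P\<^sub>p\<close>; the pullback functionals then show that \<open>g - P \<circ> \<phi>\<close> is
  flat on the fibre of \<open>a\<close>.\<close>

lemma flat_at_comp_minus_poly:
  assumes "a \<in> X"
  shows "\<exists>P\<in>polys p. \<forall>b\<in>V. \<phi> b = a \<longrightarrow> flat_at p (\<lambda>y. (f \<circ> \<phi>) y - P (\<phi> y)) b"
proof -
  define K where "K = nabla_depth p TYPE('n)"
  define S where "S = {(\<xi>, l). (a, \<xi>, l) \<in> nabla_stage p X f K \<and> (\<forall>\<beta>. \<beta> \<notin> MI p \<longrightarrow> \<xi> \<beta> = 0)}"
  obtain c where c: "\<And>\<xi> l. (\<xi>, l) \<in> S \<Longrightarrow> (\<Sum>\<beta>\<in>MI p. c \<beta> * \<xi> \<beta>) = l"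
  proof -
    have "\<exists>c. \<forall>u\<in>S. (\<Sum>\<beta>\<in>MI p. c \<beta> * fst u \<beta>) = snd u"
      by (rule linear_graph_coefficients[OF finite_MI])
        (use nabla_stage_lincomb nabla_stage_value_zero[OF nabla_fun, of K] in \<open>auto simp: S_def K_def\<close>)
    then show ?thesis using that by fastforce
  qed
  define P where "P y = (\<Sum>\<alpha>\<in>MI p. c \<alpha> * mono \<alpha> y)" for y
  have "flat_at p (\<lambda>y. (f \<circ> \<phi>) y - P (\<phi> y)) b" if b: "b \<in> V" "\<phi> b = a" for b
    unfolding flat_at_def
  proof (intro allI impI)
    fix js :: "'m list" assume js: "length js \<le> p"
    have Ck_P: "Ck p V (\<lambda>y. P (\<phi> y))"
      unfolding P_def
      by (intro Ck_sum[OF open_V finite_MI] Ck_cmult[OF open_V] Ck_mono_comp[OF open_V Ck_\<phi>])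
    have "(\<phi> b, pullback_functional p \<phi> js b, partial_iter js (f \<circ> \<phi>) b) \<in> nabla_stage p X f K"
      using nabla_stage_mono[OF _ pullback_functional_in_nabla_stage[OF js b(1)]]
        Suc_le_nabla_depth[OF js, where 'n = 'n] unfolding K_def by simp
    then have "(pullback_functional p \<phi> js b, partial_iter js (f \<circ> \<phi>) b) \<in> S"
      unfolding S_def using b(2) by (simp add: pullback_functional_def)
    then show "partial_iter js (\<lambda>y. (f \<circ> \<phi>) y - P (\<phi> y)) b = 0"
      using partial_iter_diff[OF open_V Ck_comp Ck_P js b(1)] c
        partial_iter_poly_comp[OF open_V Ck_\<phi> js b(1)] unfolding P_def by simp
  qed
  moreover have "P \<in> polys p" unfolding polys_def P_def by blast
  ultimately show ?thesis by blast
qed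

end

theorem corollary5p3:
  fixes p :: nat
    and U :: "(real^'n::finite) set" and V :: "(real^'m::finite) set"
    and X :: "(real^'n) set"
    and \<phi> :: "real^'m \<Rightarrow> real^'n"
    and f :: "real^'n \<Rightarrow> real"
  assumes "open U" and "open V"
    and "X \<subseteq> U" and "closedin (top_of_set U) X"
    and "Ck_map p V \<phi>" and "\<phi> ` V \<subseteq> X"
    and "nabla_is_function p X f"
  shows "Ck p V (f \<circ> \<phi>)
    \<and> (\<forall>a\<in>X. \<exists>P\<in>polys p. \<forall>b\<in>V. \<phi> b = a \<longrightarrow> flat_at p (\<lambda>y. (f \<circ> \<phi>) y - P (\<phi> y)) b)"
  using Ck_comp[OF assms(2,5,6,7)] flat_at_comp_minus_poly[OF assms(2,5,6,7)] by blast

end
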